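(* For all $n\in\mathbb N$ and $0<\varepsilon<\frac12$ there exists $C=C(n)>0$ such that for $j=1,\dots,n$ and $i=1,2$, $$\|b_{j,i}^{\varepsilon,n}\|_\varepsilon\le\frac{C^j}{\sqrt{\lambda\log\frac1\varepsilon}},\qquad \|(-\mathcal L_0)^{1/2}b_{j,i}^{\varepsilon,n}\|_\varepsilon\le C^j.$$
   Context: Fix $\hat\lambda,\nu>0$ and $\lambda>0$. $\rho\in\mathcal S(\mathbb R^2)$ radially symmetric, $\int\rho=1$, Fourier transform supported in the unit ball; $V=\rho*\rho$, $\hat V_\varepsilon(p)=\hat V(\varepsilon p)$. For $n\ge1$, $\Gamma_n^\varepsilon$ is the Hilbert space of symmetric functions on $(\mathbb R^2)^n$ with $\langle\hat\psi,\hat\phi\rangle_\varepsilon=n!\int\prod_i\frac{\hat V_\varepsilon(p_i)}{|p_i|^2}\overline{\hat\psi}\hat\phi\,dp_{1:n}$. $a\times b=a_1b_2-a_2b_1$; $(-\mathcal L_0\hat\psi)(p_{1:n})=\frac{\nu^2}2|\sum_ip_i|^2\hat\psi$; $(\mathcal A_+^\varepsilon\hat\psi)(p_{1:n+1})=-\frac1{n+1}\frac{\hat\lambda}{\sqrt{\log(1/\varepsilon)}}\sum_{i=1}^{n+1}(p_i\times\sum_kp_k)\hat\psi(p_{1:n+1\setminus i})$. $\mathcal V^\varepsilon=(\mathcal V_1^\varepsilon,\mathcal V_2^\varepsilon)\in(\Gamma_1^\varepsilon)^2$ with $\hat{\mathcal V}_1^\varepsilon(p)=-\imath\frac{\hat\lambda}{\sqrt{\log(1/\varepsilon)}}p_2$,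 $\hat{\mathcal V}_2^\varepsilon(p)=\imath\frac{\hat\lambda}{\sqrt{\log(1/\varepsilon)}}p_1$. For $F:[0,\infty)\to\mathbb R$, $F(L^\varepsilon(\lambda-\mathcal L_0))$ multiplies $\hat\psi\in\Gamma_m^\varepsilon$ by $F(L^\varepsilon(\lambda+\frac{\nu^2}2|\sum_ip_i|^2))$, $L^\varepsilon(x)=\frac{\pi\hat\lambda^2}{|\log\varepsilon^2|}\log(1+\frac1{\varepsilon^2x})$. $G_1\equiv0$, $G_k(x)=\int_0^x(1+\frac4{\nu^4}G_{k-1}(y))^{-1}dy$. Componentwise, $b_1^{\varepsilon,n}=[\lambda-\mathcal L_0(1+\frac4{\nu^4}G_n(L^\varepsilon(\lambda-\mathcal L_0)))]^{-1}\mathcal V^\varepsilon$ and $b_j^{\varepsilon,n}=[\lambda-\mathcal L_0(1+\frac4{\nu^4}G_{n+1-j}(L^\varepsilon(\lambda-\mathcal L_0)))]^{-1}\mathcal A_+^\varepsilon b_{j-1}^{\varepsilon,n}$, $2\le j\le n$; $b_{j,i}^{\varepsilon,n}$ is the $i$-th component of $b_j^{\varepsilon,n}$. *)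

theory Defs
  imports "HOL-Analysis.Analysis"
begin

definition pdiff :: "2 \<Rightarrow> (real^2 \<Rightarrow> real) \<Rightarrow> real^2 \<Rightarrow> real" where
  "pdiff k f x = frechet_derivative f (at x) (axis k 1)"

fun iter_pdiff :: "2 list \<Rightarrow> (real^2 \<Rightarrow> real) \<Rightarrow> real^2 \<Rightarrow> real" where
  "iter_pdiff [] f = f"
| "iter_pdiff (k # ks) f = pdiff k (iter_pdiff ks f)"

definition schwartz :: "(real^2 \<Rightarrow> real) \<Rightarrow> bool" where
  "schwartz f \<longleftrightarrow>
     (\<forall>ks x. iter_pdiff ks f differentiable (at x)) \<and>
     (\<forall>ks (m::nat). bounded (range (\<lambda>x. (1 + norm x) ^ m * iter_pdiff ks f x)))"

definition radial :: "(real^2 \<Rightarrow> real) \<Rightarrow> bool" where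
  "radial f \<longleftrightarrow> (\<forall>x y. norm x = norm y \<longrightarrow> f x = f y)"

definition ft :: "(real^2 \<Rightarrow> real) \<Rightarrow> real^2 \<Rightarrow> complex" where
  "ft f p = (LINT x|lborel. complex_of_real (f x) * cis (- (p \<bullet> x)))"

definition conv :: "(real^2 \<Rightarrow> real) \<Rightarrow> (real^2 \<Rightarrow> real) \<Rightarrow> real^2 \<Rightarrow> real" where
  "conv f g x = (LINT y|lborel. f y * g (x - y))"

definition Vhat :: "(real^2 \<Rightarrow> real) \<Rightarrow> real \<Rightarrow> real^2 \<Rightarrow> complex" where
  "Vhat rho eps p = ft (conv rho rho) (eps *\<^sub>R p)"

text \<open>An element of \<open>\<Gamma>_n\<close> is represented by its Fourier transform, a function of
  \<open>p :: nat \<Rightarrow> real^2\<close> of which only \<open>p 0, \<dots>, p (n-1)\<close> matter.\<close>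

definition sumP :: "nat \<Rightarrow> (nat \<Rightarrow> real^2) \<Rightarrow> real^2" where
  "sumP n p = (\<Sum>i<n. p i)"

definition gnorm_sq :: "(real^2 \<Rightarrow> real) \<Rightarrow> real \<Rightarrow> nat \<Rightarrow> ((nat \<Rightarrow> real^2) \<Rightarrow> complex) \<Rightarrow> ennreal" where
  "gnorm_sq rho eps n psi =
     ennreal (fact n) *
     (\<integral>\<^sup>+ p. ennreal (\<Prod>i<n. Re (Vhat rho eps (p i)) / (norm (p i))\<^sup>2) * ennreal ((cmod (psi p))\<^sup>2)
        \<partial>(PiM {..<n} (\<lambda>_. (lborel :: (real^2) measure))))"

definition cross :: "real^2 \<Rightarrow> real^2 \<Rightarrow> real" where
  "cross a b = a$1 * b$2 - a$2 * b$1"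

definition drop_idx :: "nat \<Rightarrow> (nat \<Rightarrow> real^2) \<Rightarrow> nat \<Rightarrow> real^2" where
  "drop_idx i p k = (if k < i then p k else p (Suc k))"

definition Aplus :: "real \<Rightarrow> real \<Rightarrow> nat \<Rightarrow> ((nat \<Rightarrow> real^2) \<Rightarrow> complex) \<Rightarrow> (nat \<Rightarrow> real^2) \<Rightarrow> complex" where
  "Aplus lhat eps n psi p =
     - (1 / of_nat (n + 1)) * complex_of_real (lhat / sqrt (ln (1 / eps))) *
       (\<Sum>i<n+1. complex_of_real (cross (p i) (sumP (n + 1) p)) * psi (drop_idx i p))"

definition Vvec :: "real \<Rightarrow> real \<Rightarrow> nat \<Rightarrow> (nat \<Rightarrow> real^2) \<Rightarrow> complex" where
  "Vvec lhat eps c p =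
     (if c = 1 then - \<i> * complex_of_real (lhat / sqrt (ln (1 / eps)) * (p 0)$2)
      else \<i> * complex_of_real (lhat / sqrt (ln (1 / eps)) * (p 0)$1))"

definition Leps :: "real \<Rightarrow> real \<Rightarrow> real \<Rightarrow> real" where
  "Leps lhat eps x = pi * lhat\<^sup>2 / \<bar>ln (eps\<^sup>2)\<bar> * ln (1 + 1 / (eps\<^sup>2 * x))"

text \<open>\<open>G_1 = 0\<close>, \<open>G_k(x) = \<integral>_0^x (1 + 4/\<nu>^4 G_{k-1}(y))^{-1} dy\<close>; \<open>G_0\<close> is unused.\<close>
fun Gk :: "real \<Rightarrow> nat \<Rightarrow> real \<Rightarrow> real" where
  "Gk nu 0 x = 0"
| "Gk nu (Suc 0) x = 0"
| "Gk nu (Suc (Suc k)) x = integral {0..x} (\<lambda>y. inverse (1 + 4 / nu ^ 4 * Gk nu (Suc k) y))"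

text \<open>\<open>[\<lambda> - \<L>_0 (1 + 4/\<nu>^4 G_m(L^\<epsilon>(\<lambda> - \<L>_0)))]^{-1}\<close> on \<open>\<Gamma>_k\<close> (Fourier multiplier).\<close>
definition Res :: "real \<Rightarrow> real \<Rightarrow> real \<Rightarrow> real \<Rightarrow> nat \<Rightarrow> nat \<Rightarrow> ((nat \<Rightarrow> real^2) \<Rightarrow> complex) \<Rightarrow> (nat \<Rightarrow> real^2) \<Rightarrow> complex" where
  "Res lhat nu lam eps m k psi p =
     (let q = nu\<^sup>2 / 2 * (norm (sumP k p))\<^sup>2 in
      complex_of_real (inverse (lam + q * (1 + 4 / nu ^ 4 * Gk nu m (Leps lhat eps (lam + q))))) * psi p)"

text \<open>\<open>b_{j,c}^{\<epsilon>,n}\<close> (an element of \<open>\<Gamma>_j\<close>), for \<open>j \<ge> 1\<close>; the value at \<open>j = 0\<close> is unused.\<close>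
fun bfun :: "real \<Rightarrow> real \<Rightarrow> real \<Rightarrow> real \<Rightarrow> nat \<Rightarrow> nat \<Rightarrow> nat \<Rightarrow> (nat \<Rightarrow> real^2) \<Rightarrow> complex" where
  "bfun lhat nu lam eps n 0 c = (\<lambda>_. 0)"
| "bfun lhat nu lam eps n (Suc 0) c = Res lhat nu lam eps n 1 (Vvec lhat eps c)"
| "bfun lhat nu lam eps n (Suc (Suc j)) c =
     Res lhat nu lam eps (n - Suc j) (Suc (Suc j)) (Aplus lhat eps (Suc j) (bfun lhat nu lam eps n (Suc j) c))"

definition sqrtL0 :: "real \<Rightarrow> nat \<Rightarrow> ((nat \<Rightarrow> real^2) \<Rightarrow> complex) \<Rightarrow> (nat \<Rightarrow> real^2) \<Rightarrow> complex" where
  "sqrtL0 nu k psi p = complex_of_real (sqrt (nu\<^sup>2 / 2) * norm (sumP k p)) * psi p"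

end

theory Submission
  imports Defs
begin

text \<open>
  Replacing every factor in the recursion for \<open>b\<^sub>j\<close> by its modulus gives a positive majorant
  \<open>B\<^sub>j\<close>: since \<open>G\<^sub>m \<ge> 0\<close>, the resolvent is at most \<open>1 / (\<lambda> + a |\<Sigma> p|\<^sup>2)\<close> with
  \<open>a = \<nu>\<^sup>2 / 2\<close>, and \<open>|p\<^sub>i \<times> \<Sigma> p|\<close> is at most \<open>|p\<^sub>i|\<close> times the modulus of the sum of
  the other momenta. The weight \<open>Vhat \<rho> \<epsilon> p / |p|\<^sup>2\<close> of the norm is at most
  \<open>M 1{|p| \<le> 1/\<epsilon>} / |p|\<^sup>2\<close>. Cauchy--Schwarz over the \<open>j + 1\<close> terms of \<open>\<A>\<^sub>+\<close>, followed
  by integrating out the new momentum with the others fixed, bounds the weighted integrals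
  \<open>X\<^sub>j = \<integral> W B\<^sub>j\<^sup>2 (\<lambda> + a |\<Sigma> p|\<^sup>2)\<close> and \<open>Y\<^sub>j = \<integral> W B\<^sub>j\<^sup>2\<close> by
  \<open>g\<^sup>2 M K\<^sub>1 X\<^sub>j / a\<close> and \<open>g\<^sup>2 M K\<^sub>2 X\<^sub>j / a\<close> at level \<open>j + 1\<close>, where \<open>K\<^sub>e\<close> bounds
  \<open>\<integral> 1{|y| \<le> 1/\<epsilon>} (\<lambda> + a |y + s|\<^sup>2)\<^sup>-\<^sup>e dy\<close> uniformly in \<open>s\<close>. In the plane \<open>K\<^sub>2\<close> is
  finite while \<open>K\<^sub>1 = O(log (1/\<epsilon>))\<close>, and this logarithm is cancelled exactly by the
  coupling \<open>g\<^sup>2 = lhat\<^sup>2 / log (1/\<epsilon>)\<close>. Hence \<open>X\<^sub>j \<le> E\<^sup>j\<close> and \<open>Y\<^sub>j \<le> E\<^sup>j / log (1/\<epsilon>)\<close>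
  uniformly in \<open>\<epsilon>\<close>.
\<close>

section \<open>Integrals over dyadic shells\<close>

lemma ex_dyadic_bracket:
  fixes x :: real
  assumes "1 \<le> x"
  shows "\<exists>k. 2 ^ k \<le> x \<and> x < 2 ^ Suc k"
proof -
  define K where "K = (LEAST K. x < 2 ^ K)"
  have x_less: "x < 2 ^ K"
    unfolding K_def using real_arch_pow[of 2 x] by (auto intro: LeastI_ex)
  then have "K \<noteq> 0" using assms by (cases K) auto
  moreover have "\<not> x < 2 ^ (K - 1)"
    unfolding K_def by (rule not_less_Least) (use \<open>K \<noteq> 0\<close> K_def in simp)
  ultimately show ?thesis using x_less by (intro exI[of _ "K - 1"]) auto
qed

lemma pred_in_ball [measurable]: "Measurable.pred borel (\<lambda>x::'a::metric_space. x \<in> ball c r)"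
  using borel_open[OF open_ball, of c r] unfolding pred_def by (simp add: ball_def)

lemma pred_in_cball [measurable]: "Measurable.pred borel (\<lambda>x::'a::metric_space. x \<in> cball c r)"
  using borel_closed[OF closed_cball, of c r] unfolding pred_def by (simp add: cball_def)

lemma nn_integral_lborel_translate:
  fixes f :: "'a::euclidean_space \<Rightarrow> ennreal"
  assumes [measurable]: "f \<in> borel_measurable borel"
  shows "(\<integral>\<^sup>+y. f (y + s) \<partial>lborel) = (\<integral>\<^sup>+y. f y \<partial>lborel)"
proof -
  have "(\<integral>\<^sup>+y. f y \<partial>lborel) = (\<integral>\<^sup>+y. f y \<partial>distr lborel borel ((+) s))"
    by (simp add: lborel_distr_plus)
  also have "\<dots> = (\<integral>\<^sup>+y. f (s + y) \<partial>lborel)"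
    by (subst nn_integral_distr) auto
  finally show ?thesis by (simp add: add.commute)
qed

lemma integral_lborel_translate:
  fixes g :: "'a::euclidean_space \<Rightarrow> 'b::{banach, second_countable_topology}"
  assumes [measurable]: "g \<in> borel_measurable borel"
  shows "(LINT x|lborel. g (x + s)) = (LINT x|lborel. g x)"
proof -
  have "(LINT x|lborel. g x) = integral\<^sup>L (distr lborel borel ((+) s)) g"
    by (simp add: lborel_distr_plus)
  also have "\<dots> = (LINT x|lborel. g (s + x))"
    by (subst integral_distr) auto
  finally show ?thesis by (simp add: add.commute)
qed

lemma ennreal_term_le_suminf: "(f :: nat \<Rightarrow> ennreal) k \<le> suminf f"
  using sum_le_suminf[of f "{k}"] by (simp add: summableI)

lemma ennreal_mult3:
  "0 \<le> x \<Longrightarrow> 0 \<le> y \<Longrightarrow> 0 \<le> z \<Longrightarrow> ennreal x * (ennreal y * (ennreal z * X)) = ennreal (x * y * z) * X"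
  by (simp add: ennreal_mult mult.assoc)

lemma emeasure_lborel_ball_dyadic:
  "emeasure lborel (ball (0::'a::euclidean_space) (2 ^ Suc k))
     = ennreal (unit_ball_vol DIM('a) * 2 ^ DIM('a) * (2 ^ DIM('a)) ^ k)"
proof -
  have "((2::real) ^ Suc k) ^ DIM('a) = 2 ^ DIM('a) * (2 ^ DIM('a)) ^ k"
    by (simp flip: power_mult add: mult.commute power_add)
  then show ?thesis by (simp add: emeasure_ball mult.assoc)
qed

lemma nn_integral_dyadic_balls:
  fixes c :: "nat \<Rightarrow> real"
  defines "d \<equiv> (2::real) ^ DIM('a::euclidean_space)"
  assumes c0: "0 \<le> c0" and c: "\<And>k. 0 \<le> c k" and summable: "summable (\<lambda>k. c k * d ^ k)"
  shows "(\<integral>\<^sup>+z. ennreal c0 * indicator (ball (0::'a) 1) z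
      + (\<Sum>k. ennreal (c k) * indicator (ball 0 (2 ^ Suc k)) z) \<partial>lborel)
    = ennreal (unit_ball_vol DIM('a) * (c0 + d * (\<Sum>k. c k * d ^ k)))"
proof -
  define \<omega> where "\<omega> = unit_ball_vol DIM('a)"
  have \<omega>: "0 < \<omega>" unfolding \<omega>_def by simp
  have "(\<integral>\<^sup>+z. ennreal c0 * indicator (ball (0::'a) 1) z
      + (\<Sum>k. ennreal (c k) * indicator (ball 0 (2 ^ Suc k)) z) \<partial>lborel)
      = (\<integral>\<^sup>+z. ennreal c0 * indicator (ball (0::'a) 1) z \<partial>lborel)
        + (\<integral>\<^sup>+z. (\<Sum>k. ennreal (c k) * indicator (ball (0::'a) (2 ^ Suc k)) z) \<partial>lborel)"
    by (rule nn_integral_add) measurable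
  also have "\<dots> = ennreal c0 * emeasure lborel (ball (0::'a) 1)
      + (\<Sum>k. ennreal (c k) * emeasure lborel (ball (0::'a) (2 ^ Suc k)))"
    by (subst nn_integral_suminf, measurable)
       (simp only: nn_integral_cmult_indicator sets_lborel borel_open open_ball)
  also have "\<dots> = ennreal (\<omega> * c0) + (\<Sum>k. ennreal (\<omega> * d * (c k * d ^ k)))"
  proof -
    have "emeasure lborel (ball (0::'a) 1) = ennreal \<omega>" by (simp add: emeasure_ball \<omega>_def)
    moreover have "ennreal (c k) * emeasure lborel (ball (0::'a) (2 ^ Suc k))
        = ennreal (\<omega> * d * (c k * d ^ k))" for k
      unfolding emeasure_lborel_ball_dyadic using c[of k] \<omega>
      by (subst ennreal_mult[symmetric]) (auto simp: \<omega>_def d_def mult_ac)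
    ultimately show ?thesis using c0 \<omega> by (simp add: ennreal_mult mult.commute)
  qed
  also have "(\<Sum>k. ennreal (\<omega> * d * (c k * d ^ k))) = ennreal (\<omega> * d * (\<Sum>k. c k * d ^ k))"
    using c \<omega> summable
    by (subst suminf_ennreal2) (auto simp: d_def suminf_mult intro!: summable_mult)
  also have "ennreal (\<omega> * c0) + \<dots> = ennreal (\<omega> * (c0 + d * (\<Sum>k. c k * d ^ k)))"
    using c0 c \<omega> suminf_nonneg[OF summable]
    by (simp add: d_def distrib_left mult.assoc flip: ennreal_plus)
  finally show ?thesis unfolding \<omega>_def .
qed

lemma nn_integral_le_dyadic_shells:
  fixes f :: "'a::euclidean_space \<Rightarrow> real" and c :: "nat \<Rightarrow> real"
  defines "d \<equiv> (2::real) ^ DIM('a)"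
  assumes c0: "0 \<le> c0" and c: "\<And>k. 0 \<le> c k" and summable: "summable (\<lambda>k. c k * d ^ k)"
    and ball_le: "\<And>z. norm z < 1 \<Longrightarrow> f z \<le> c0"
    and shell_le: "\<And>k z. 2 ^ k \<le> norm z \<Longrightarrow> norm z < 2 ^ Suc k \<Longrightarrow> f z \<le> c k"
  shows "(\<integral>\<^sup>+z. ennreal (f z) \<partial>lborel) \<le> ennreal (unit_ball_vol DIM('a) * (c0 + d * (\<Sum>k. c k * d ^ k)))"
proof -
  have "ennreal (f z) \<le> ennreal c0 * indicator (ball 0 1) z
      + (\<Sum>k. ennreal (c k) * indicator (ball 0 (2 ^ Suc k)) z)" for z
  proof (cases "norm z < 1")
    case True
    then have "ennreal (f z) \<le> ennreal c0 * indicator (ball 0 1) z"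
      using ball_le by (simp add: ennreal_leI)
    then show ?thesis by (rule order_trans) simp
  next
    case False
    then obtain k where k: "2 ^ k \<le> norm z" "norm z < 2 ^ Suc k"
      using ex_dyadic_bracket[of "norm z"] by auto
    then have "ennreal (f z) \<le> ennreal (c k) * indicator (ball 0 (2 ^ Suc k)) z"
      using shell_le[OF k] by (simp add: ennreal_leI)
    also have "\<dots> \<le> (\<Sum>k. ennreal (c k) * indicator (ball 0 (2 ^ Suc k)) z)"
      by (rule ennreal_term_le_suminf)
    finally show ?thesis by (rule order_trans) simp
  qed
  then have "(\<integral>\<^sup>+z. ennreal (f z) \<partial>lborel) \<le> (\<integral>\<^sup>+z. ennreal c0 * indicator (ball (0::'a) 1) z
      + (\<Sum>k. ennreal (c k) * indicator (ball 0 (2 ^ Suc k)) z) \<partial>lborel)"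
    by (intro nn_integral_mono)
  then show ?thesis using nn_integral_dyadic_balls[OF c0 c summable[unfolded d_def]] unfolding d_def by simp
qed

lemma nn_integral_le_dyadic_shells_plane:
  fixes f :: "real^2 \<Rightarrow> real" and c :: "nat \<Rightarrow> real"
  assumes "0 \<le> c0" "\<And>k. 0 \<le> c k" "summable (\<lambda>k. c k * 4 ^ k)"
    and "\<And>z. norm z < 1 \<Longrightarrow> f z \<le> c0"
    and "\<And>k z. 2 ^ k \<le> norm z \<Longrightarrow> norm z < 2 ^ Suc k \<Longrightarrow> f z \<le> c k"
  shows "(\<integral>\<^sup>+z. ennreal (f z) \<partial>lborel) \<le> ennreal (unit_ball_vol 2 * (c0 + 4 * (\<Sum>k. c k * 4 ^ k)))"
  using nn_integral_le_dyadic_shells[of c0 c f] assms by simp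

lemma resolvent_ge_dyadic:
  fixes z :: "'a::real_normed_vector"
  assumes "0 \<le> lam" "0 < a" "2 ^ j \<le> norm z"
  shows "a * 4 ^ j \<le> lam + a * (norm z)\<^sup>2"
proof -
  have "(4::real) ^ j = (2 ^ j)\<^sup>2" by (simp add: power2_eq_square flip: power_mult_distrib)
  also have "\<dots> \<le> (norm z)\<^sup>2" using assms(3) by (intro power_mono) auto
  finally show ?thesis using assms(1,2) by (smt (verit) mult_left_mono)
qed

lemma nn_integral_resolvent_sq_le:
  fixes s :: "real^2"
  assumes lam: "0 < lam" and a: "0 < a"
  shows "(\<integral>\<^sup>+y. ennreal (1 / (lam + a * (norm (y + s))\<^sup>2)\<^sup>2) \<partial>lborel)
    \<le> ennreal (unit_ball_vol 2 * (1 / lam\<^sup>2 + 16 / (3 * a\<^sup>2)))"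
proof -
  have pos: "0 < lam + a * (norm z)\<^sup>2" for z :: "real^2" using lam a by (simp add: add_pos_nonneg)
  have geom: "1 / (a\<^sup>2 * 16 ^ k) * 4 ^ k = 1 / a\<^sup>2 * (1 / 4) ^ k" for k :: nat
  proof -
    have "(16::real) ^ k = 4 ^ k * 4 ^ k" by (simp flip: power_mult_distrib)
    then show ?thesis by (simp add: field_simps power_one_over)
  qed
  have sum_geom: "(\<Sum>k. 1 / a\<^sup>2 * (1 / 4 :: real) ^ k) = 4 / (3 * a\<^sup>2)"
    by (subst suminf_mult, simp add: summable_geometric, subst suminf_geometric) auto
  have "(\<lambda>y::real^2. ennreal (1 / (lam + a * (norm y)\<^sup>2)\<^sup>2)) \<in> borel_measurable borel"
    by measurable
  from nn_integral_lborel_translate[OF this, of s]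
  have "(\<integral>\<^sup>+y. ennreal (1 / (lam + a * (norm (y + s))\<^sup>2)\<^sup>2) \<partial>lborel)
      = (\<integral>\<^sup>+y. ennreal (1 / (lam + a * (norm (y::real^2))\<^sup>2)\<^sup>2) \<partial>lborel)" by simp
  also have "\<dots> \<le> ennreal (unit_ball_vol 2 * (1 / lam\<^sup>2 + 4 * (\<Sum>k. 1 / (a\<^sup>2 * 16 ^ k) * 4 ^ k)))"
  proof (rule nn_integral_le_dyadic_shells_plane)
    show "summable (\<lambda>k. 1 / (a\<^sup>2 * 16 ^ k) * 4 ^ k :: real)"
      unfolding geom by (intro summable_mult summable_geometric) simp
    show "1 / (lam + a * (norm z)\<^sup>2)\<^sup>2 \<le> 1 / lam\<^sup>2" for z :: "real^2"
      using pos[of z] lam a by (intro divide_left_mono power_mono) auto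
    show "1 / (lam + a * (norm z)\<^sup>2)\<^sup>2 \<le> 1 / (a\<^sup>2 * 16 ^ k)" if "2 ^ k \<le> norm z" for k and z :: "real^2"
    proof -
      have "(a * 4 ^ k)\<^sup>2 \<le> (lam + a * (norm z)\<^sup>2)\<^sup>2"
        using resolvent_ge_dyadic[OF _ a that] lam a by (intro power_mono) auto
      moreover have "(a * 4 ^ k)\<^sup>2 = a\<^sup>2 * 16 ^ k"
        by (simp add: power_mult_distrib power2_eq_square flip: power_mult_distrib)
      ultimately show ?thesis using a pos[of z] by (intro divide_left_mono) auto
    qed
  qed (use lam a in auto)
  also have "\<dots> = ennreal (unit_ball_vol 2 * (1 / lam\<^sup>2 + 16 / (3 * a\<^sup>2)))"
    unfolding geom sum_geom by simp
  finally show ?thesis .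
qed


lemma nn_integral_dyadic_ball_resolvent_le:
  assumes lam: "0 < lam" and a: "0 < a"
  shows "(\<integral>\<^sup>+z. ennreal (indicator (ball (0::real^2) (2 ^ K)) z / (lam + a * (norm z)\<^sup>2)) \<partial>lborel)
    \<le> ennreal (unit_ball_vol 2 * (1 / lam + 4 * real K / a))"
proof -
  have pos: "0 < lam + a * (norm z)\<^sup>2" for z :: "real^2" using a lam by (simp add: add_pos_nonneg)
  have "(\<integral>\<^sup>+z. ennreal (indicator (ball (0::real^2) (2 ^ K)) z / (lam + a * (norm z)\<^sup>2)) \<partial>lborel)
      \<le> ennreal (unit_ball_vol 2 * (1 / lam + 4 * (\<Sum>j. (if j < K then 1 / (a * 4 ^ j) else 0) * 4 ^ j)))"
  proof (rule nn_integral_le_dyadic_shells_plane)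
    show "summable (\<lambda>j. (if j < K then 1 / (a * 4 ^ j) else 0) * (4::real) ^ j)"
      by (rule summable_finite[of "{..<K}"]) auto
    show "indicator (ball 0 (2 ^ K)) z / (lam + a * (norm z)\<^sup>2) \<le> 1 / lam" for z :: "real^2"
      using pos[of z] lam a by (auto simp: indicator_def intro!: divide_left_mono)
    show "indicator (ball 0 (2 ^ K)) z / (lam + a * (norm z)\<^sup>2) \<le> (if j < K then 1 / (a * 4 ^ j) else 0)"
      if "2 ^ j \<le> norm z" for j and z :: "real^2"
    proof (cases "j < K")
      case True
      then show ?thesis using resolvent_ge_dyadic[OF less_imp_le[OF lam] a that] a pos[of z]
        by (auto simp: indicator_def intro!: divide_left_mono)
    next
      case False
      then have "(2::real) ^ K \<le> 2 ^ j" by simp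
      then have "\<not> norm z < 2 ^ K" using that by linarith
      then show ?thesis using False by (simp add: indicator_def)
    qed
  qed (use lam a in auto)
  also have "(\<Sum>j. (if j < K then 1 / (a * 4 ^ j) else 0) * (4::real) ^ j) = real K / a"
    by (subst suminf_finite[of "{..<K}"]) auto
  finally show ?thesis by simp
qed

lemma dyadic_constant_le_log:
  fixes \<omega> lam a R :: real
  assumes "0 < \<omega>" "0 < lam" "0 < a" "2 \<le> R" "2 ^ k \<le> R"
  shows "\<omega> * (1 / lam + 4 * real (Suc k) / a) + \<omega> / a \<le> \<omega> * (1 / lam + 9 / a) * (ln R / ln 2)"
proof -
  have "ln (2 ^ k) \<le> ln R" using assms(4,5) by (subst ln_le_cancel_iff) auto
  then have "real k \<le> ln R / ln 2" by (simp add: ln_realpow field_simps)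
  moreover have "1 \<le> ln R / ln 2" using assms(4) by simp
  ultimately have "\<omega> * (1 / lam + 5 / a) * 1 + 4 * \<omega> / a * real k
      \<le> \<omega> * (1 / lam + 5 / a) * (ln R / ln 2) + 4 * \<omega> / a * (ln R / ln 2)"
    using assms(1-3) by (intro add_mono mult_left_mono) auto
  moreover have "\<omega> * (1 / lam + 4 * real (Suc k) / a) + \<omega> / a = \<omega> * (1 / lam + 5 / a) * 1 + 4 * \<omega> / a * real k"
    using assms(3) by (simp add: field_simps)
  moreover have "\<omega> * (1 / lam + 5 / a) * (ln R / ln 2) + 4 * \<omega> / a * (ln R / ln 2)
      = \<omega> * (1 / lam + 9 / a) * (ln R / ln 2)"
    by (simp add: field_simps)
  ultimately show ?thesis by simp
qed

lemma nn_integral_ball_resolvent_le: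
  fixes s :: "real^2"
  assumes lam: "0 < lam" and a: "0 < a" and R: "2 \<le> R"
  shows "(\<integral>\<^sup>+y. ennreal (indicator (cball 0 R) y / (lam + a * (norm (y + s))\<^sup>2)) \<partial>lborel)
    \<le> ennreal (unit_ball_vol 2 * (1 / lam + 9 / a) * (ln R / ln 2))"
proof -
  obtain k where k: "2 ^ k \<le> R" "R < 2 ^ Suc k" using ex_dyadic_bracket[of R] R by auto
  define \<omega> where "\<omega> = unit_ball_vol 2"
  have "0 < \<omega>" unfolding \<omega>_def by simp
  have pos: "0 < lam + a * (norm z)\<^sup>2" for z :: "real^2" using a lam by (simp add: add_pos_nonneg)
  define inner where "inner z = indicator (ball 0 (2 ^ Suc k)) z / (lam + a * (norm z)\<^sup>2)" for z :: "real^2"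
  define outer where "outer z = indicator (cball s R) z / (a * 4 ^ Suc k)" for z :: "real^2"
  have inner_le: "(\<integral>\<^sup>+z. ennreal (inner z) \<partial>lborel) \<le> ennreal (\<omega> * (1 / lam + 4 * real (Suc k) / a))"
    unfolding inner_def \<omega>_def by (rule nn_integral_dyadic_ball_resolvent_le[OF lam a])
  have "R\<^sup>2 \<le> (2 ^ Suc k)\<^sup>2" using k(2) R by (intro power_mono) auto
  also have "\<dots> = 4 ^ Suc k" by (simp add: power2_eq_square flip: power_mult_distrib)
  finally have "\<omega> * R\<^sup>2 / (a * 4 ^ Suc k) \<le> \<omega> / a" using \<open>0 < \<omega>\<close> a by (simp add: field_simps)
  moreover have "(\<integral>\<^sup>+z. ennreal (outer z) \<partial>lborel) = ennreal (1 / (a * 4 ^ Suc k)) * emeasure lborel (cball s R)"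
    using a unfolding outer_def
    by (subst nn_integral_cmult_indicator[symmetric]) (auto simp: indicator_def intro!: nn_integral_cong)
  moreover have "\<dots> = ennreal (\<omega> * R\<^sup>2 / (a * 4 ^ Suc k))"
    using R a \<open>0 < \<omega>\<close> by (simp add: emeasure_cball \<omega>_def ennreal_mult'[symmetric])
  ultimately have outer_le: "(\<integral>\<^sup>+z. ennreal (outer z) \<partial>lborel) \<le> ennreal (\<omega> / a)"
    by (simp add: ennreal_leI)
  have "(\<lambda>z::real^2. ennreal (indicator (cball s R) z / (lam + a * (norm z)\<^sup>2))) \<in> borel_measurable borel"
    by measurable
  from nn_integral_lborel_translate[OF this, of s]
  have "(\<integral>\<^sup>+y. ennreal (indicator (cball 0 R) y / (lam + a * (norm (y + s))\<^sup>2)) \<partial>lborel)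
      = (\<integral>\<^sup>+z. ennreal (indicator (cball s R) z / (lam + a * (norm z)\<^sup>2)) \<partial>lborel)"
    by (simp add: indicator_def dist_norm)
  also have "\<dots> \<le> (\<integral>\<^sup>+z. ennreal (inner z) + ennreal (outer z) \<partial>lborel)"
  proof (rule nn_integral_mono)
    fix z :: "real^2"
    have "1 / (lam + a * (norm z)\<^sup>2) \<le> 1 / (a * 4 ^ Suc k)" if "\<not> norm z < 2 ^ Suc k"
      using resolvent_ge_dyadic[OF less_imp_le[OF lam] a, of "Suc k" z] that a pos[of z]
      by (intro divide_left_mono) auto
    moreover have "0 \<le> inner z" "0 \<le> outer z" using pos[of z] a by (auto simp: inner_def outer_def)
    ultimately show "ennreal (indicator (cball s R) z / (lam + a * (norm z)\<^sup>2)) \<le> ennreal (inner z) + ennreal (outer z)"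
      using pos[of z] by (auto simp: inner_def outer_def indicator_def ennreal_leI simp flip: ennreal_plus)
  qed
  also have "\<dots> = (\<integral>\<^sup>+z. ennreal (inner z) \<partial>lborel) + (\<integral>\<^sup>+z. ennreal (outer z) \<partial>lborel)"
    by (rule nn_integral_add) (auto simp: inner_def outer_def)
  also have "\<dots> \<le> ennreal (\<omega> * (1 / lam + 4 * real (Suc k) / a) + \<omega> / a)"
    using add_mono[OF inner_le outer_le] \<open>0 < \<omega>\<close> lam a by (simp flip: ennreal_plus)
  also have "\<dots> \<le> ennreal (\<omega> * (1 / lam + 9 / a) * (ln R / ln 2))"
    using dyadic_constant_le_log[OF \<open>0 < \<omega>\<close> lam a R k(1)] by (rule ennreal_leI)
  finally show ?thesis unfolding \<omega>_def .
qed

section \<open>The Fourier transform of \<open>V\<close>\<close>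

lemma borel_measurable_cis [measurable (raw)]:
  assumes "g \<in> borel_measurable M"
  shows "(\<lambda>x. cis (g x)) \<in> borel_measurable M"
proof -
  have "cis \<in> borel_measurable borel"
    by (rule borel_measurable_continuous_onI) (intro continuous_intros)
  from measurable_compose[OF assms this] show ?thesis .
qed

lemma integrable_ft_conv_integrand:
  fixes f g :: "real^2 \<Rightarrow> real"
  assumes [measurable]: "f \<in> borel_measurable borel" "g \<in> borel_measurable borel"
    and "integrable lborel f" "integrable lborel g"
  shows "integrable (lborel \<Otimes>\<^sub>M lborel) (\<lambda>(x, y). complex_of_real (f y * g (x - y)) * cis (- (q \<bullet> x)))"
    (is "integrable _ ?h")
proof -
  have finite: "(\<integral>\<^sup>+x. ennreal (norm (f x)) \<partial>lborel) < \<infinity>" "(\<integral>\<^sup>+x. ennreal (norm (g x)) \<partial>lborel) < \<infinity>"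
    using assms by (simp_all add: integrable_iff_bounded)
  have shift: "(\<integral>\<^sup>+x. ennreal (norm (g (x - y))) \<partial>lborel) = (\<integral>\<^sup>+x. ennreal (norm (g x)) \<partial>lborel)" for y
    using nn_integral_lborel_translate[of "\<lambda>x. ennreal (norm (g x))" "- y"] by simp
  have "(\<integral>\<^sup>+z. ennreal (norm (?h z)) \<partial>(lborel \<Otimes>\<^sub>M lborel))
      = (\<integral>\<^sup>+y. (\<integral>\<^sup>+x. ennreal (norm (?h (x, y))) \<partial>lborel) \<partial>lborel)"
    by (rule lborel_pair.nn_integral_snd[symmetric]) measurable
  also have "\<dots> = (\<integral>\<^sup>+y. ennreal (norm (f y)) * (\<integral>\<^sup>+x. ennreal (norm (g (x - y))) \<partial>lborel) \<partial>lborel)"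
    by (intro nn_integral_cong) (simp add: norm_mult abs_mult ennreal_mult nn_integral_cmult)
  also have "\<dots> = (\<integral>\<^sup>+x. ennreal (norm (f x)) \<partial>lborel) * (\<integral>\<^sup>+x. ennreal (norm (g x)) \<partial>lborel)"
    unfolding shift by (simp add: nn_integral_multc)
  also have "\<dots> < \<infinity>" using finite by (simp add: ennreal_mult_less_top)
  finally show ?thesis by (intro integrableI_bounded) measurable
qed

lemma ft_conv:
  fixes f g :: "real^2 \<Rightarrow> real"
  assumes [measurable]: "f \<in> borel_measurable borel" "g \<in> borel_measurable borel"
    and "integrable lborel f" "integrable lborel g"
  shows "ft (conv f g) q = ft f q * ft g q"
proof -
  define h where "h = (\<lambda>(x::real^2, y::real^2). complex_of_real (f y * g (x - y)) * cis (- (q \<bullet> x)))"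
  have inner: "(LINT x|lborel. h (x, y)) = complex_of_real (f y) * cis (- (q \<bullet> y)) * ft g q" for y
  proof -
    have "(LINT x|lborel. h (x, y))
        = complex_of_real (f y) * (LINT x|lborel. complex_of_real (g (x - y)) * cis (- (q \<bullet> x)))"
      unfolding h_def by (simp add: mult.assoc)
    also have "(LINT x|lborel. complex_of_real (g (x - y)) * cis (- (q \<bullet> x)))
        = (LINT x|lborel. complex_of_real (g ((x + y) - y)) * cis (- (q \<bullet> (x + y))))"
      by (rule integral_lborel_translate[symmetric]) measurable
    also have "\<dots> = (LINT x|lborel. cis (- (q \<bullet> y)) * (complex_of_real (g x) * cis (- (q \<bullet> x))))"
      by (intro Bochner_Integration.integral_cong) (auto simp: inner_add_right cis_mult algebra_simps)
    also have "\<dots> = cis (- (q \<bullet> y)) * ft g q" unfolding ft_def by simp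
    finally show ?thesis by (simp add: mult_ac)
  qed
  have "ft (conv f g) q = (LINT x|lborel. (LINT y|lborel. h (x, y)))"
    unfolding ft_def conv_def h_def by (simp flip: integral_complex_of_real)
  also have "\<dots> = (LINT y|lborel. (LINT x|lborel. h (x, y)))"
    using lborel_pair.Fubini_integral[of "\<lambda>x y. h (x, y)"] integrable_ft_conv_integrand[OF assms]
    unfolding h_def by simp
  also have "\<dots> = (LINT y|lborel. complex_of_real (f y) * cis (- (q \<bullet> y)) * ft g q)"
    by (simp add: inner)
  also have "\<dots> = ft f q * ft g q" by (simp add: ft_def)
  finally show ?thesis .
qed

lemma schwartz_borel_measurable:
  assumes "schwartz f"
  shows "f \<in> borel_measurable borel"
proof -
  have "f differentiable (at x)" for x
    using assms unfolding schwartz_def by (metis iter_pdiff.simps(1))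
  then have "continuous_on UNIV f"
    by (intro continuous_at_imp_continuous_on) (auto intro: differentiable_imp_continuous_within)
  then show ?thesis by (rule borel_measurable_continuous_onI)
qed

lemma schwartz_integrable:
  assumes "schwartz f"
  shows "integrable lborel f"
proof -
  have "bounded (range (\<lambda>x. (1 + norm x) ^ 3 * iter_pdiff [] f x))"
    using assms unfolding schwartz_def by blast
  then obtain B where B: "\<And>x. \<bar>(1 + norm x) ^ 3 * f x\<bar> \<le> B"
    unfolding bounded_iff by auto
  have "0 \<le> B" using B[of 0] by linarith
  have decay: "\<bar>f x\<bar> \<le> B / r ^ 3" if "1 \<le> r" "r \<le> 1 + norm x" for x r
  proof -
    have "r ^ 3 \<le> (1 + norm x) ^ 3" using that by (intro power_mono) auto
    then have "\<bar>f x\<bar> * r ^ 3 \<le> \<bar>(1 + norm x) ^ 3 * f x\<bar>"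
      by (simp add: abs_mult mult.commute mult_left_mono)
    then show ?thesis using B[of x] that by (simp add: field_simps)
  qed
  have "(\<integral>\<^sup>+x. ennreal \<bar>f x\<bar> \<partial>lborel) \<le> ennreal (unit_ball_vol 2 * (B + 4 * (\<Sum>k. B / 8 ^ k * 4 ^ k)))"
  proof (rule nn_integral_le_dyadic_shells_plane)
    have "B / 8 ^ k * 4 ^ k = B * (1 / 2) ^ k" for k :: nat
    proof -
      have "(8::real) ^ k = 4 ^ k * 2 ^ k" by (simp flip: power_mult_distrib)
      then show ?thesis by (simp add: field_simps power_one_over)
    qed
    then show "summable (\<lambda>k. B / 8 ^ k * (4::real) ^ k)"
      by (simp add: summable_geometric)
    show "\<bar>f z\<bar> \<le> B" for z using decay[of 1 z] by simp
    show "\<bar>f z\<bar> \<le> B / 8 ^ k" if "2 ^ k \<le> norm z" for k z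
      using decay[of "2 ^ k" z] that by (simp flip: power_mult add: mult.commute[of k 3] power_mult)
  qed (use \<open>0 \<le> B\<close> in auto)
  then have "(\<integral>\<^sup>+x. ennreal (norm (f x)) \<partial>lborel) < \<infinity>"
    by (simp add: le_less_trans)
  then show ?thesis using schwartz_borel_measurable[OF assms] by (intro integrableI_bounded) auto
qed

lemma Vhat_eq_ft_sq:
  assumes "schwartz rho"
  shows "Vhat rho eps p = (ft rho (eps *\<^sub>R p))\<^sup>2"
  unfolding Vhat_def power2_eq_square
  using assms by (intro ft_conv schwartz_borel_measurable schwartz_integrable)

lemma norm_Vhat_le:
  assumes "schwartz rho"
  shows "cmod (Vhat rho eps p) \<le> (LINT x|lborel. \<bar>rho x\<bar>)\<^sup>2"
proof -
  have "cmod (ft rho q) \<le> (LINT x|lborel. \<bar>rho x\<bar>)" for q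
    unfolding ft_def using integral_norm_bound[of lborel "\<lambda>x. complex_of_real (rho x) * cis (- (q \<bullet> x))"]
    by (simp add: norm_mult)
  then show ?thesis
    unfolding Vhat_eq_ft_sq[OF assms] norm_power by (intro power_mono) auto
qed

lemma Vhat_eq_0:
  assumes "schwartz rho" and "\<forall>p. norm p > 1 \<longrightarrow> ft rho p = 0"
    and "0 < eps" and "1 / eps < norm p"
  shows "Vhat rho eps p = 0"
proof -
  have "1 < norm (eps *\<^sub>R p)" using assms(3,4) by (simp add: field_simps)
  then show ?thesis using assms(1,2) by (simp add: Vhat_eq_ft_sq)
qed

section \<open>Integrating out one momentum\<close>

lemma vimage_reindex_PiE:
  assumes e: "bij_betw e J I" and A: "\<And>k. k \<in> J \<Longrightarrow> A k \<subseteq> S"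
  shows "(\<lambda>x. \<lambda>k\<in>J. x (e k)) -` PiE J A \<inter> PiE I (\<lambda>_. S) = PiE I (\<lambda>i. A (the_inv_into J e i))"
proof (intro set_eqI iffI)
  have inv_in: "the_inv_into J e i \<in> J" and e_inv: "e (the_inv_into J e i) = i" if "i \<in> I" for i
    using e that by (auto simp: bij_betw_def f_the_inv_into_f intro: the_inv_into_into)
  fix x
  assume "x \<in> (\<lambda>x. \<lambda>k\<in>J. x (e k)) -` PiE J A \<inter> PiE I (\<lambda>_. S)"
  then show "x \<in> PiE I (\<lambda>i. A (the_inv_into J e i))"
    using inv_in e_inv by (auto simp: PiE_def Pi_def) metis
next
  fix x
  assume x: "x \<in> PiE I (\<lambda>i. A (the_inv_into J e i))"
  have "x (e k) \<in> A k" if "k \<in> J" for k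
    using x e that by (auto simp: PiE_def Pi_def bij_betw_def the_inv_into_f_f)
  then show "x \<in> (\<lambda>x. \<lambda>k\<in>J. x (e k)) -` PiE J A \<inter> PiE I (\<lambda>_. S)"
    using x A e by (auto simp: PiE_def Pi_def bij_betw_def the_inv_into_into subset_eq)
qed

lemma distr_PiM_reindex_bij:
  assumes M: "sigma_finite_measure M" and J: "finite J" and e: "bij_betw e J I"
  shows "distr (PiM I (\<lambda>_. M)) (PiM J (\<lambda>_. M)) (\<lambda>x. \<lambda>k\<in>J. x (e k)) = PiM J (\<lambda>_. M)"
proof -
  interpret ps: product_sigma_finite "\<lambda>_. M"
    using M by (simp add: product_sigma_finite_def)
  have I: "finite I" using e J bij_betw_finite by blast
  have inv_in: "the_inv_into J e i \<in> J" if "i \<in> I" for i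
    using e that by (auto simp: bij_betw_def intro: the_inv_into_into)
  have meas: "(\<lambda>x. \<lambda>k\<in>J. x (e k)) \<in> measurable (PiM I (\<lambda>_. M)) (PiM J (\<lambda>_. M))"
    using e by (intro measurable_restrict measurable_component_singleton) (auto simp: bij_betw_def)
  show ?thesis
  proof (rule ps.PiM_eqI[OF J])
    fix A assume A: "\<And>k. k \<in> J \<Longrightarrow> A k \<in> sets M"
    have "emeasure (distr (PiM I (\<lambda>_. M)) (PiM J (\<lambda>_. M)) (\<lambda>x. \<lambda>k\<in>J. x (e k))) (PiE J A)
        = emeasure (PiM I (\<lambda>_. M)) (PiE I (\<lambda>i. A (the_inv_into J e i)))"
    proof -
      have "A k \<subseteq> space M" if "k \<in> J" for k using A[OF that] by (rule sets.sets_into_space)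
      then show ?thesis using A
        by (subst emeasure_distr[OF meas]) (auto simp: space_PiM vimage_reindex_PiE[OF e] intro!: sets_PiM_I_finite J)
    qed
    also have "\<dots> = (\<Prod>i\<in>I. emeasure M (A (the_inv_into J e i)))"
      using A inv_in by (intro ps.emeasure_PiM I) auto
    also have "\<dots> = (\<Prod>k\<in>J. emeasure M (A k))"
      using e by (subst prod.reindex_bij_betw[OF e, symmetric])
        (auto simp: bij_betw_def the_inv_into_f_f intro!: prod.cong)
    finally show "emeasure (distr (PiM I (\<lambda>_. M)) (PiM J (\<lambda>_. M)) (\<lambda>x. \<lambda>k\<in>J. x (e k))) (PiE J A)
        = (\<Prod>k\<in>J. emeasure M (A k))" .
  qed simp
qed

abbreviation Pi_lborel :: "nat \<Rightarrow> (nat \<Rightarrow> real^2) measure" where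
  "Pi_lborel j \<equiv> PiM {..<j} (\<lambda>_. lborel)"

lemma drop_idx_eq_reindex: "drop_idx i p k = p (if k < i then k else Suc k)"
  by (simp add: drop_idx_def)

lemma drop_idx_fun_upd [simp]: "drop_idx i (p(i := y)) = drop_idx i p"
  by (auto simp: drop_idx_def fun_eq_iff)

lemma measurable_drop_idx [measurable]:
  assumes "i \<le> j"
  shows "(\<lambda>p. restrict (drop_idx i p) {..<j}) \<in> measurable (Pi_lborel (Suc j)) (Pi_lborel j)"
  unfolding drop_idx_eq_reindex using assms
  by (intro measurable_restrict measurable_component_singleton) auto

lemma measurable_drop_idx_apply:
  fixes F :: "(nat \<Rightarrow> real^2) \<Rightarrow> real^2 \<Rightarrow> ennreal"
  assumes "i \<le> j"
    and F: "(\<lambda>(q, y). F q y) \<in> borel_measurable (Pi_lborel j \<Otimes>\<^sub>M lborel)"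
    and local: "\<And>q q' y. (\<And>k. k < j \<Longrightarrow> q k = q' k) \<Longrightarrow> F q y = F q' y"
  shows "(\<lambda>p. F (drop_idx i p) (p i)) \<in> borel_measurable (Pi_lborel (Suc j))"
proof -
  have "(\<lambda>p. (\<lambda>(q, y). F q y) (restrict (drop_idx i p) {..<j}, p i)) \<in> borel_measurable (Pi_lborel (Suc j))"
    using assms(1) by (intro measurable_compose[OF _ F] measurable_Pair measurable_drop_idx
        measurable_component_singleton) auto
  moreover have "F (restrict (drop_idx i p) {..<j}) (p i) = F (drop_idx i p) (p i)" for p
    by (rule local) simp
  ultimately show ?thesis by simp
qed

lemma nn_integral_drop_idx:
  fixes F :: "(nat \<Rightarrow> real^2) \<Rightarrow> real^2 \<Rightarrow> ennreal"
  assumes i: "i \<le> j"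
    and F: "(\<lambda>(q, y). F q y) \<in> borel_measurable (Pi_lborel j \<Otimes>\<^sub>M lborel)"
    and local: "\<And>q q' y. (\<And>k. k < j \<Longrightarrow> q k = q' k) \<Longrightarrow> F q y = F q' y"
  shows "(\<integral>\<^sup>+p. F (drop_idx i p) (p i) \<partial>Pi_lborel (Suc j)) = (\<integral>\<^sup>+q. (\<integral>\<^sup>+y. F q y \<partial>lborel) \<partial>Pi_lborel j)"
proof -
  interpret ps: product_sigma_finite "\<lambda>_::nat. (lborel :: (real^2) measure)"
    by (simp add: product_sigma_finite_def sigma_finite_lborel)
  define I where "I = {..<Suc j} - {i}"
  have ins: "{..<Suc j} = insert i I" and "i \<notin> I" "finite I" using i unfolding I_def by auto
  define e where "e k = (if k < i then k else Suc k)" for k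
  have e: "bij_betw e {..<j} I"
    by (rule bij_betwI[where g = "\<lambda>k. if k < i then k else k - 1"])
       (use i in \<open>auto simp: e_def I_def split: if_splits\<close>)
  define H where "H q = (\<integral>\<^sup>+y. F q y \<partial>lborel)" for q
  have H_meas: "H \<in> borel_measurable (Pi_lborel j)"
    unfolding H_def using F by (rule lborel.borel_measurable_nn_integral)
  have H_local: "H q = H q'" if "\<And>k. k < j \<Longrightarrow> q k = q' k" for q q'
  proof -
    have "F q = F q'" by (rule ext, rule local) (use that in auto)
    then show ?thesis unfolding H_def by simp
  qed
  have "(\<lambda>p. F (drop_idx i p) (p i)) \<in> borel_measurable (Pi_lborel (Suc j))"
    using i F local by (rule measurable_drop_idx_apply)
  then have "(\<integral>\<^sup>+p. F (drop_idx i p) (p i) \<partial>Pi_lborel (Suc j))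
      = (\<integral>\<^sup>+x. (\<integral>\<^sup>+y. F (drop_idx i (x(i := y))) ((x(i := y)) i) \<partial>lborel) \<partial>PiM I (\<lambda>_. lborel))"
    unfolding ins
    by (intro ps.product_nn_integral_insert \<open>finite I\<close> \<open>i \<notin> I\<close>)
  also have "\<dots> = (\<integral>\<^sup>+x. H (drop_idx i x) \<partial>PiM I (\<lambda>_. lborel))"
    by (simp add: H_def)
  also have "\<dots> = (\<integral>\<^sup>+x. H (\<lambda>k\<in>{..<j}. x (e k)) \<partial>PiM I (\<lambda>_. lborel))"
    by (intro nn_integral_cong H_local) (simp add: drop_idx_eq_reindex e_def)
  also have "\<dots> = (\<integral>\<^sup>+q. H q \<partial>distr (PiM I (\<lambda>_. lborel)) (Pi_lborel j) (\<lambda>x. \<lambda>k\<in>{..<j}. x (e k)))"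
    using e H_meas
    by (intro nn_integral_distr[symmetric] measurable_restrict measurable_component_singleton)
       (auto simp: bij_betw_def)
  also have "\<dots> = (\<integral>\<^sup>+q. H q \<partial>Pi_lborel j)"
    by (simp add: distr_PiM_reindex_bij[OF sigma_finite_lborel _ e])
  finally show ?thesis unfolding H_def .
qed

section \<open>A pointwise majorant of \<open>b\<^sub>j\<close>\<close>

lemma Gk_nonneg: "0 \<le> Gk nu m x"
proof (induction nu m x rule: Gk.induct)
  case (3 nu k x)
  have "0 \<le> inverse (1 + 4 / nu ^ 4 * Gk nu (Suc k) y)" for y
    using "3"[of y] by (simp add: zero_le_even_power)
  then show ?case
    by (cases "(\<lambda>y. inverse (1 + 4 / nu ^ 4 * Gk nu (Suc k) y)) integrable_on {0..x}")
       (auto intro: Henstock_Kurzweil_Integration.integral_nonneg simp: not_integrable_integral)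
qed auto

lemma norm_Res_le:
  assumes "0 < lam"
  shows "cmod (Res lhat nu lam eps m k psi p) \<le> cmod (psi p) / (lam + nu\<^sup>2 / 2 * (norm (sumP k p))\<^sup>2)"
proof -
  define q where "q = nu\<^sup>2 / 2 * (norm (sumP k p))\<^sup>2"
  define G where "G = Gk nu m (Leps lhat eps (lam + q))"
  have "0 \<le> q * (4 / nu ^ 4 * G)"
    unfolding q_def G_def by (simp add: Gk_nonneg zero_le_even_power)
  then have le: "lam + q \<le> lam + q * (1 + 4 / nu ^ 4 * G)" by (simp add: distrib_left)
  have "0 < lam + q" using assms unfolding q_def by (simp add: add_pos_nonneg)
  then have inv: "0 \<le> inverse (lam + q * (1 + 4 / nu ^ 4 * G))" "inverse (lam + q * (1 + 4 / nu ^ 4 * G)) \<le> inverse (lam + q)"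
    using le by (auto intro: le_imp_inverse_le)
  have "cmod (Res lhat nu lam eps m k psi p) = inverse (lam + q * (1 + 4 / nu ^ 4 * G)) * cmod (psi p)"
    unfolding Res_def Let_def q_def[symmetric] G_def[symmetric]
    by (simp only: norm_mult norm_of_real abs_of_nonneg[OF inv(1)])
  also have "\<dots> \<le> inverse (lam + q) * cmod (psi p)" using inv(2) by (rule mult_right_mono) simp
  also have "\<dots> = cmod (psi p) / (lam + q)" by (simp add: field_simps)
  finally show ?thesis unfolding q_def .
qed

lemma sum_lessThan_Suc_drop_idx:
  fixes f :: "real^2 \<Rightarrow> 'b::comm_monoid_add"
  assumes "i < Suc k"
  shows "(\<Sum>l<Suc k. f (p l)) = f (p i) + (\<Sum>l<k. f (drop_idx i p l))"
proof -
  have "(\<Sum>l<Suc k. f (p l)) = f (p i) + (\<Sum>l\<in>{..<Suc k} - {i}. f (p l))"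
    using assms by (intro sum.remove) auto
  also have "(\<Sum>l\<in>{..<Suc k} - {i}. f (p l)) = (\<Sum>l<k. f (drop_idx i p l))"
    unfolding drop_idx_eq_reindex
    by (rule sum.reindex_bij_witness[where j = "\<lambda>l. if l < i then l else l - 1"
          and i = "\<lambda>l. if l < i then l else Suc l"]) (use assms in auto)
  finally show ?thesis .
qed

lemma prod_lessThan_Suc_drop_idx:
  fixes f :: "real^2 \<Rightarrow> 'b::comm_monoid_mult"
  assumes "i < Suc k"
  shows "(\<Prod>l<Suc k. f (p l)) = f (p i) * (\<Prod>l<k. f (drop_idx i p l))"
proof -
  have "(\<Prod>l<Suc k. f (p l)) = f (p i) * (\<Prod>l\<in>{..<Suc k} - {i}. f (p l))"
    using assms by (intro prod.remove) auto
  also have "(\<Prod>l\<in>{..<Suc k} - {i}. f (p l)) = (\<Prod>l<k. f (drop_idx i p l))"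
    unfolding drop_idx_eq_reindex
    by (rule prod.reindex_bij_witness[where j = "\<lambda>l. if l < i then l else l - 1"
          and i = "\<lambda>l. if l < i then l else Suc l"]) (use assms in auto)
  finally show ?thesis .
qed

lemma sumP_Suc_drop_idx: "i < Suc k \<Longrightarrow> sumP (Suc k) p = p i + sumP k (drop_idx i p)"
  unfolding sumP_def using sum_lessThan_Suc_drop_idx[of i k id p] by simp

lemma sumP_cong: "(\<And>k. k < j \<Longrightarrow> p k = q k) \<Longrightarrow> sumP j p = sumP j q"
  unfolding sumP_def by (intro sum.cong) auto

lemma borel_measurable_sumP [measurable (raw)]:
  assumes "\<And>k. k < j \<Longrightarrow> (\<lambda>x. g x k) \<in> borel_measurable N"
  shows "(\<lambda>x. sumP j (g x)) \<in> borel_measurable N"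
  unfolding sumP_def using assms by (intro borel_measurable_sum) auto

lemma cross_add_self: "cross a (a + b) = cross a b"
  unfolding cross_def by (simp add: algebra_simps)

lemma abs_cross_le: "\<bar>cross a b\<bar> \<le> norm a * norm b"
proof -
  have norm_sq: "(norm x)\<^sup>2 = (x$1)\<^sup>2 + (x$2)\<^sup>2" for x :: "real^2"
    unfolding norm_vec_def L2_set_def by (simp add: UNIV_2)
  have "(norm a * norm b)\<^sup>2 - (cross a b)\<^sup>2 = (a$1 * b$1 + a$2 * b$2)\<^sup>2"
    unfolding power_mult_distrib norm_sq cross_def by (simp add: power2_eq_square algebra_simps)
  then have "(cross a b)\<^sup>2 \<le> (norm a * norm b)\<^sup>2" by (smt (verit) zero_le_power2)
  then show ?thesis using abs_le_square_iff[of "cross a b" "norm a * norm b"] by simp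
qed

lemma norm_Aplus_le:
  assumes "0 \<le> lhat" "0 < eps" "eps \<le> 1"
  shows "cmod (Aplus lhat eps k psi p) \<le> lhat / sqrt (ln (1 / eps)) / real (Suc k) *
    (\<Sum>i<Suc k. norm (p i) * norm (sumP k (drop_idx i p)) * cmod (psi (drop_idx i p)))"
proof -
  have cmod_Suc: "cmod (1 + of_nat k) = real (Suc k)" by (metis norm_of_nat of_nat_Suc)
  have "cmod (Aplus lhat eps k psi p) = lhat / sqrt (ln (1 / eps)) / real (Suc k) *
      cmod (\<Sum>i<Suc k. complex_of_real (cross (p i) (sumP (Suc k) p)) * psi (drop_idx i p))"
    unfolding Aplus_def using assms by (simp add: norm_mult norm_divide cmod_Suc)
  also have "\<dots> \<le> lhat / sqrt (ln (1 / eps)) / real (Suc k) *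
      (\<Sum>i<Suc k. norm (p i) * norm (sumP k (drop_idx i p)) * cmod (psi (drop_idx i p)))"
  proof (intro mult_left_mono order_trans[OF norm_sum sum_mono])
    fix i assume "i \<in> {..<Suc k}"
    then have "\<bar>cross (p i) (sumP (Suc k) p)\<bar> \<le> norm (p i) * norm (sumP k (drop_idx i p))"
      by (simp add: sumP_Suc_drop_idx cross_add_self abs_cross_le)
    then show "cmod (complex_of_real (cross (p i) (sumP (Suc k) p)) * psi (drop_idx i p))
        \<le> norm (p i) * norm (sumP k (drop_idx i p)) * cmod (psi (drop_idx i p))"
      unfolding norm_mult by (intro mult_right_mono) auto
  qed (use assms in simp)
  finally show ?thesis .
qed

lemma norm_Vvec_le:
  assumes "0 \<le> lhat" "0 < eps" "eps \<le> 1"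
  shows "cmod (Vvec lhat eps c p) \<le> lhat / sqrt (ln (1 / eps)) * norm (p 0)"
proof -
  define g where "g = lhat / sqrt (ln (1 / eps))"
  have "0 \<le> g" unfolding g_def using assms by (simp add: field_simps)
  then show ?thesis unfolding Vvec_def g_def[symmetric]
    by (auto simp: norm_mult abs_mult intro!: mult_left_mono component_le_norm_cart)
qed

text \<open>The recursion of \<^const>\<open>bfun\<close> with every factor replaced by its modulus: the cross product
  is bounded by \<^term>\<open>norm (p i) * norm (sumP j (drop_idx i p))\<close> and, since \<open>G\<^sub>m \<ge> 0\<close>, the
  resolvent by \<open>(\<lambda> + a |\<Sigma> p|\<^sup>2)\<^sup>-\<^sup>1\<close>.\<close>
fun majorant :: "real \<Rightarrow> real \<Rightarrow> real \<Rightarrow> nat \<Rightarrow> (nat \<Rightarrow> real^2) \<Rightarrow> real" where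
  "majorant g a lam 0 p = 0"
| "majorant g a lam (Suc 0) p = g * norm (p 0) / (lam + a * (norm (p 0))\<^sup>2)"
| "majorant g a lam (Suc (Suc j)) p = g / real (Suc (Suc j)) *
     (\<Sum>i<Suc (Suc j). norm (p i) * norm (sumP (Suc j) (drop_idx i p)) * majorant g a lam (Suc j) (drop_idx i p))
     / (lam + a * (norm (sumP (Suc (Suc j)) p))\<^sup>2)"

lemma norm_bfun_le_majorant:
  assumes lam: "0 < lam" and lhat: "0 \<le> lhat" and eps: "0 < eps" "eps \<le> 1" and "0 < j"
  shows "cmod (bfun lhat nu lam eps n j c p) \<le> majorant (lhat / sqrt (ln (1 / eps))) (nu\<^sup>2 / 2) lam j p"
  using assms(5)
proof (induction j arbitrary: p rule: nat_induct_non_zero)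
  case 1
  have "cmod (bfun lhat nu lam eps n 1 c p) \<le> cmod (Vvec lhat eps c p) / (lam + nu\<^sup>2 / 2 * (norm (p 0))\<^sup>2)"
    using norm_Res_le[OF lam, of lhat nu eps n 1 "Vvec lhat eps c" p] by (simp add: sumP_def)
  also have "\<dots> \<le> lhat / sqrt (ln (1 / eps)) * norm (p 0) / (lam + nu\<^sup>2 / 2 * (norm (p 0))\<^sup>2)"
    using norm_Vvec_le[OF lhat eps, of c p] lam by (intro divide_right_mono) auto
  also have "\<dots> = majorant (lhat / sqrt (ln (1 / eps))) (nu\<^sup>2 / 2) lam 1 p" by simp
  finally show ?case .
next
  case (Suc j)
  then obtain j' where j: "j = Suc j'" by (cases j) auto
  define D where "D = lam + nu\<^sup>2 / 2 * (norm (sumP (Suc (Suc j')) p))\<^sup>2"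
  have "0 < D" unfolding D_def using lam by (simp add: add_pos_nonneg)
  have "cmod (bfun lhat nu lam eps n (Suc (Suc j')) c p)
      \<le> cmod (Aplus lhat eps (Suc j') (bfun lhat nu lam eps n (Suc j') c) p) / D"
    unfolding D_def using norm_Res_le[OF lam] by simp
  also have "\<dots> \<le> lhat / sqrt (ln (1 / eps)) / real (Suc (Suc j')) *
      (\<Sum>i<Suc (Suc j'). norm (p i) * norm (sumP (Suc j') (drop_idx i p))
         * majorant (lhat / sqrt (ln (1 / eps))) (nu\<^sup>2 / 2) lam (Suc j') (drop_idx i p)) / D"
    using Suc.IH[unfolded j] lhat eps \<open>0 < D\<close>
    by (intro divide_right_mono order_trans[OF norm_Aplus_le[OF lhat eps]] mult_left_mono sum_mono) auto
  finally show ?case unfolding j D_def by simp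
qed

lemma majorant_cong:
  assumes "\<And>k. k < j \<Longrightarrow> p k = q k"
  shows "majorant g a lam j p = majorant g a lam j q"
  using assms
proof (induction g a lam j p arbitrary: q rule: majorant.induct)
  case (3 g a lam j p)
  have drop: "drop_idx i p k = drop_idx i q k" if "k < Suc j" for i k
    unfolding drop_idx_def using "3.prems" that by auto
  have "majorant g a lam (Suc j) (drop_idx i p) = majorant g a lam (Suc j) (drop_idx i q)"
    if "i < Suc (Suc j)" for i
    using that drop by (intro "3.IH") auto
  moreover have "sumP (Suc j) (drop_idx i p) = sumP (Suc j) (drop_idx i q)" for i
    using drop by (rule sumP_cong)
  moreover have "sumP (Suc (Suc j)) p = sumP (Suc (Suc j)) q"
    using "3.prems" by (rule sumP_cong)
  ultimately show ?case
    unfolding majorant.simps using "3.prems"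
    by (intro arg_cong2[where f = "(/)"] arg_cong2[where f = "(*)"] refl sum.cong) auto
qed auto

lemma borel_measurable_majorant:
  assumes "\<And>k. k < j \<Longrightarrow> (\<lambda>x. g x k) \<in> borel_measurable N"
  shows "(\<lambda>x. majorant c a lam j (g x)) \<in> borel_measurable N"
  using assms
proof (induction j arbitrary: g)
  case (Suc j)
  show ?case
  proof (cases j)
    case 0
    then have [measurable]: "(\<lambda>x. g x 0) \<in> borel_measurable N" using Suc.prems by simp
    show ?thesis unfolding 0 by simp
  next
    case (Suc j')
    have [measurable]: "(\<lambda>x. g x i) \<in> borel_measurable N" if "i < Suc (Suc j')" for i
      using \<open>j = Suc j'\<close> "Suc.prems" that by simp
    have drop [measurable]: "(\<lambda>x. drop_idx i (g x) k) \<in> borel_measurable N" if "k < Suc j'" for i k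
      unfolding drop_idx_def using that by simp
    have [measurable]: "(\<lambda>x. majorant c a lam (Suc j') (drop_idx i (g x))) \<in> borel_measurable N" for i
      using "Suc.IH"[of "\<lambda>x. drop_idx i (g x)"] drop unfolding \<open>j = Suc j'\<close> by blast
    show ?thesis unfolding \<open>j = Suc j'\<close> majorant.simps by measurable
  qed
qed simp

section \<open>Weighted \<open>L\<^sup>2\<close> bounds for the majorant\<close>

text \<open>In the application \<open>M\<close> bounds \<open>|Vhat \<rho> \<epsilon>|\<close>, which vanishes outside \<open>cball 0 R\<close> with
  \<open>R = 1/\<epsilon>\<close>; \<open>g = lhat / sqrt (log (1/\<epsilon>))\<close> and \<open>a = \<nu>\<^sup>2 / 2\<close>.\<close>
locale majorant_moments =
  fixes M R g a lam :: real
  assumes M_nonneg: "0 \<le> M" and a_pos: "0 < a" and lam_pos: "0 < lam"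
begin

abbreviation B :: "nat \<Rightarrow> (nat \<Rightarrow> real^2) \<Rightarrow> real" where
  "B \<equiv> majorant g a lam"

lemma resolvent_pos: "0 < lam + a * (norm (z :: real^2))\<^sup>2"
  using lam_pos a_pos by (simp add: add_pos_nonneg)

definition weight :: "real^2 \<Rightarrow> real" where
  "weight y = M * indicator (cball 0 R) y / (norm y)\<^sup>2"

definition weights :: "nat \<Rightarrow> (nat \<Rightarrow> real^2) \<Rightarrow> real" where
  "weights j p = (\<Prod>k<j. weight (p k))"

lemma weight_nonneg: "0 \<le> weight y"
  unfolding weight_def using M_nonneg by simp

lemma weight_mult_norm_sq_le: "weight y * (norm y)\<^sup>2 \<le> M * indicator (cball 0 R) y"
  unfolding weight_def using M_nonneg by (cases "y = 0") auto

lemma weights_nonneg: "0 \<le> weights j p"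
  unfolding weights_def by (simp add: prod_nonneg weight_nonneg)

lemma weights_Suc_drop_idx: "i < Suc m \<Longrightarrow> weights (Suc m) p = weight (p i) * weights m (drop_idx i p)"
  unfolding weights_def by (rule prod_lessThan_Suc_drop_idx)

lemma weights_cong: "(\<And>k. k < j \<Longrightarrow> p k = q k) \<Longrightarrow> weights j p = weights j q"
  unfolding weights_def by (intro prod.cong) auto

lemma borel_measurable_weight [measurable]: "weight \<in> borel_measurable borel"
  unfolding weight_def by measurable

lemma borel_measurable_weights:
  assumes "\<And>k. k < j \<Longrightarrow> (\<lambda>x. h x k) \<in> borel_measurable N"
  shows "(\<lambda>x. weights j (h x)) \<in> borel_measurable N"
  unfolding weights_def using assms by (intro borel_measurable_prod measurable_compose[OF _ borel_measurable_weight]) auto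

lemma B_SucSuc_sq_le:
  fixes j :: nat
  defines "n \<equiv> real (Suc (Suc j))"
  shows "(B (Suc (Suc j)) p)\<^sup>2 \<le> g\<^sup>2 / n *
    (\<Sum>i<Suc (Suc j). (norm (p i) * norm (sumP (Suc j) (drop_idx i p)) * B (Suc j) (drop_idx i p))\<^sup>2)
    / (lam + a * (norm (sumP (Suc (Suc j)) p))\<^sup>2)\<^sup>2"
proof -
  define u where "u i = norm (p i) * norm (sumP (Suc j) (drop_idx i p)) * B (Suc j) (drop_idx i p)" for i
  define D where "D = lam + a * (norm (sumP (Suc (Suc j)) p))\<^sup>2"
  have "0 < D" "0 < n" unfolding D_def n_def by (simp_all add: resolvent_pos)
  have cauchy_schwarz: "(\<Sum>i<Suc (Suc j). u i)\<^sup>2 \<le> (\<Sum>i<Suc (Suc j). (u i)\<^sup>2) * n"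
    using sum_squared_le_sum_of_squares[of u "{..<Suc (Suc j)}"] unfolding n_def by (simp only: card_lessThan)
  have "(B (Suc (Suc j)) p)\<^sup>2 = g\<^sup>2 / n\<^sup>2 * (\<Sum>i<Suc (Suc j). u i)\<^sup>2 / D\<^sup>2"
    unfolding u_def D_def n_def by (simp add: power_divide power_mult_distrib)
  also have "\<dots> \<le> g\<^sup>2 / n\<^sup>2 * ((\<Sum>i<Suc (Suc j). (u i)\<^sup>2) * n) / D\<^sup>2"
    using cauchy_schwarz by (intro divide_right_mono mult_left_mono) auto
  also have "\<dots> = g\<^sup>2 / n * (\<Sum>i<Suc (Suc j). (u i)\<^sup>2) / D\<^sup>2"
    using \<open>0 < n\<close> by (simp add: power2_eq_square)
  finally show ?thesis unfolding u_def D_def .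
qed

text \<open>\<open>moment 0 j\<close> and \<open>moment 1 j\<close> dominate \<open>1 / j!\<close> times the squared norms of \<open>b\<^sub>j\<close> and of
  \<open>(-\<L>\<^sub>0)\<^sup>1\<^sup>/\<^sup>2 b\<^sub>j\<close>.\<close>
definition moment :: "nat \<Rightarrow> nat \<Rightarrow> ennreal" where
  "moment k j = (\<integral>\<^sup>+p. ennreal (weights j p * (B j p)\<^sup>2 * (lam + a * (norm (sumP j p))\<^sup>2) ^ k) \<partial>Pi_lborel j)"

definition kernel_bound :: "nat \<Rightarrow> real \<Rightarrow> bool" where
  "kernel_bound e K \<longleftrightarrow> 0 \<le> K \<and>
     (\<forall>s :: real^2. (\<integral>\<^sup>+y. ennreal (indicator (cball 0 R) y / (lam + a * (norm (y + s))\<^sup>2) ^ e) \<partial>lborel)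
        \<le> ennreal K)"

lemma kernel_bound_1:
  assumes "2 \<le> R"
  shows "kernel_bound 1 (unit_ball_vol 2 * (1 / lam + 9 / a) * (ln R / ln 2))"
  unfolding kernel_bound_def
  using nn_integral_ball_resolvent_le[OF lam_pos a_pos assms] assms lam_pos a_pos by simp

lemma kernel_bound_2: "kernel_bound 2 (unit_ball_vol 2 * (1 / lam\<^sup>2 + 16 / (3 * a\<^sup>2)))"
  unfolding kernel_bound_def
proof (intro conjI allI)
  fix s :: "real^2"
  have "(\<integral>\<^sup>+y. ennreal (indicator (cball 0 R) y / (lam + a * (norm (y + s))\<^sup>2) ^ 2) \<partial>lborel)
      \<le> (\<integral>\<^sup>+y. ennreal (1 / (lam + a * (norm (y + s))\<^sup>2)\<^sup>2) \<partial>lborel)"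
    by (intro nn_integral_mono ennreal_leI divide_right_mono) (auto simp: indicator_def)
  also have "\<dots> \<le> ennreal (unit_ball_vol 2 * (1 / lam\<^sup>2 + 16 / (3 * a\<^sup>2)))"
    by (rule nn_integral_resolvent_sq_le[OF lam_pos a_pos])
  finally show "(\<integral>\<^sup>+y. ennreal (indicator (cball 0 R) y / (lam + a * (norm (y + s))\<^sup>2) ^ 2) \<partial>lborel)
      \<le> ennreal (unit_ball_vol 2 * (1 / lam\<^sup>2 + 16 / (3 * a\<^sup>2)))" .
qed (use lam_pos a_pos in simp)

definition energy :: "nat \<Rightarrow> (nat \<Rightarrow> real^2) \<Rightarrow> real" where
  "energy m q = weights m q * (norm (sumP m q))\<^sup>2 * (B m q)\<^sup>2"

text \<open>The term of index \<open>i\<close> in the Cauchy--Schwarz bound for \<open>B (m + 1)\<close>, written as a function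
  of the remaining momenta \<open>q = drop_idx i p\<close> and of the distinguished one \<open>y = p i\<close>.\<close>
definition insertion :: "nat \<Rightarrow> nat \<Rightarrow> (nat \<Rightarrow> real^2) \<Rightarrow> real^2 \<Rightarrow> real" where
  "insertion e m q y = weight y * (norm y)\<^sup>2 * energy m q / (lam + a * (norm (y + sumP m q))\<^sup>2) ^ e"

lemma energy_nonneg: "0 \<le> energy m q"
  unfolding energy_def by (simp add: weights_nonneg)

lemma insertion_nonneg: "0 \<le> insertion e m q y"
  unfolding insertion_def using resolvent_pos[of "y + sumP m q"]
  by (intro divide_nonneg_pos mult_nonneg_nonneg weight_nonneg energy_nonneg) auto

lemma borel_measurable_energy: "energy m \<in> borel_measurable (Pi_lborel m)"
  unfolding energy_def
  by (intro borel_measurable_times borel_measurable_power borel_measurable_norm borel_measurable_weights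
      borel_measurable_sumP borel_measurable_majorant measurable_component_singleton) auto

lemma borel_measurable_insertion:
  "(\<lambda>(q, y). ennreal (insertion e m q y)) \<in> borel_measurable (Pi_lborel m \<Otimes>\<^sub>M lborel)"
proof -
  have fst: "(\<lambda>z. fst z k) \<in> borel_measurable (Pi_lborel m \<Otimes>\<^sub>M lborel)" if "k < m" for k
    using that by (intro measurable_compose[OF measurable_fst, where g = "\<lambda>x. x k"] measurable_component_singleton) auto
  have [measurable]: "(\<lambda>z. energy m (fst z)) \<in> borel_measurable (Pi_lborel m \<Otimes>\<^sub>M lborel)"
    by (rule measurable_compose[OF measurable_fst borel_measurable_energy])
  have [measurable]: "(\<lambda>z. sumP m (fst z)) \<in> borel_measurable (Pi_lborel m \<Otimes>\<^sub>M lborel)"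
    by (intro borel_measurable_sumP fst)
  have "(\<lambda>z. ennreal (insertion e m (fst z) (snd z))) \<in> borel_measurable (Pi_lborel m \<Otimes>\<^sub>M lborel)"
    unfolding insertion_def by measurable
  then show ?thesis by (simp add: case_prod_beta')
qed

lemma insertion_cong: "(\<And>k. k < m \<Longrightarrow> q k = q' k) \<Longrightarrow> insertion e m q y = insertion e m q' y"
  unfolding insertion_def energy_def
  by (simp add: weights_cong[of m q q'] sumP_cong[of m q q'] majorant_cong[of m q q'])

lemma borel_measurable_insertion_drop_idx:
  assumes "i \<le> m"
  shows "(\<lambda>p. ennreal (insertion e m (drop_idx i p) (p i))) \<in> borel_measurable (Pi_lborel (Suc m))"
  using assms borel_measurable_insertion
  by (rule measurable_drop_idx_apply[where F = "\<lambda>q y. ennreal (insertion e m q y)"]) (metis insertion_cong)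

lemma nn_integral_energy_le: "(\<integral>\<^sup>+q. ennreal (energy m q) \<partial>Pi_lborel m) \<le> ennreal (1 / a) * moment 1 m"
proof -
  have "ennreal (energy m q)
      \<le> ennreal (1 / a) * ennreal (weights m q * (B m q)\<^sup>2 * (lam + a * (norm (sumP m q))\<^sup>2) ^ 1)" for q
  proof -
    have W: "0 \<le> weights m q * (B m q)\<^sup>2" by (simp add: weights_nonneg)
    have "energy m q = (weights m q * (B m q)\<^sup>2) * (norm (sumP m q))\<^sup>2"
      unfolding energy_def by (simp add: mult_ac)
    also have "\<dots> \<le> (weights m q * (B m q)\<^sup>2) * (1 / a * (lam + a * (norm (sumP m q))\<^sup>2))"
      using a_pos lam_pos by (intro mult_left_mono[OF _ W]) (simp add: field_simps)
    finally have "energy m q \<le> 1 / a * (weights m q * (B m q)\<^sup>2 * (lam + a * (norm (sumP m q))\<^sup>2) ^ 1)"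
      by (simp add: mult_ac)
    then show ?thesis using a_pos by (simp add: ennreal_mult'[symmetric] ennreal_leI)
  qed
  then have "(\<integral>\<^sup>+q. ennreal (energy m q) \<partial>Pi_lborel m)
      \<le> (\<integral>\<^sup>+q. ennreal (1 / a) * ennreal (weights m q * (B m q)\<^sup>2 * (lam + a * (norm (sumP m q))\<^sup>2) ^ 1) \<partial>Pi_lborel m)"
    by (intro nn_integral_mono)
  also have "\<dots> = ennreal (1 / a) * moment 1 m"
    unfolding moment_def
    by (intro nn_integral_cmult measurable_compose[OF _ measurable_ennreal] borel_measurable_times
        borel_measurable_power borel_measurable_add borel_measurable_const borel_measurable_norm
        borel_measurable_weights borel_measurable_sumP borel_measurable_majorant measurable_component_singleton) auto
  finally show ?thesis .
qed

lemma nn_integral_insertion_le: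
  assumes "kernel_bound e K"
  shows "(\<integral>\<^sup>+y. ennreal (insertion e m q y) \<partial>lborel) \<le> ennreal (M * K) * ennreal (energy m q)"
proof -
  have "(\<integral>\<^sup>+y. ennreal (insertion e m q y) \<partial>lborel)
      \<le> (\<integral>\<^sup>+y. ennreal (M * energy m q) * ennreal (indicator (cball 0 R) y / (lam + a * (norm (y + sumP m q))\<^sup>2) ^ e) \<partial>lborel)"
  proof (rule nn_integral_mono)
    fix y :: "real^2"
    have "insertion e m q y = weight y * (norm y)\<^sup>2 * energy m q / (lam + a * (norm (y + sumP m q))\<^sup>2) ^ e"
      by (simp add: insertion_def)
    also have "\<dots> \<le> M * indicator (cball 0 R) y * energy m q / (lam + a * (norm (y + sumP m q))\<^sup>2) ^ e"
      using resolvent_pos[of "y + sumP m q"]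
      by (intro divide_right_mono mult_right_mono weight_mult_norm_sq_le energy_nonneg) auto
    finally show "ennreal (insertion e m q y)
        \<le> ennreal (M * energy m q) * ennreal (indicator (cball 0 R) y / (lam + a * (norm (y + sumP m q))\<^sup>2) ^ e)"
      using M_nonneg energy_nonneg by (simp add: ennreal_mult'[symmetric] ennreal_leI mult_ac)
  qed
  also have "\<dots> = ennreal (M * energy m q)
      * (\<integral>\<^sup>+y. ennreal (indicator (cball 0 R) y / (lam + a * (norm (y + sumP m q))\<^sup>2) ^ e) \<partial>lborel)"
    by (rule nn_integral_cmult) measurable
  also have "\<dots> \<le> ennreal (M * energy m q) * ennreal K"
    using assms unfolding kernel_bound_def by (intro mult_left_mono) auto
  also have "\<dots> = ennreal (M * K) * ennreal (energy m q)"
    using M_nonneg assms energy_nonneg unfolding kernel_bound_def by (simp add: ennreal_mult'[symmetric] mult_ac)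
  finally show ?thesis .
qed

lemma nn_integral_sum_insertion_le:
  assumes "kernel_bound e K"
  shows "(\<integral>\<^sup>+p. ennreal (\<Sum>i<Suc m. insertion e m (drop_idx i p) (p i)) \<partial>Pi_lborel (Suc m))
    \<le> ennreal (real (Suc m) * M * K) * (\<integral>\<^sup>+q. ennreal (energy m q) \<partial>Pi_lborel m)"
proof -
  have K: "0 \<le> K" using assms by (simp add: kernel_bound_def)
  have local: "ennreal (insertion e m q y) = ennreal (insertion e m q' y)" if "\<And>k. k < m \<Longrightarrow> q k = q' k" for q q' y
    using insertion_cong[OF that] by simp
  have "(\<integral>\<^sup>+p. ennreal (\<Sum>i<Suc m. insertion e m (drop_idx i p) (p i)) \<partial>Pi_lborel (Suc m))
      = (\<integral>\<^sup>+p. (\<Sum>i<Suc m. ennreal (insertion e m (drop_idx i p) (p i))) \<partial>Pi_lborel (Suc m))"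
    by (intro nn_integral_cong sum_ennreal[symmetric] insertion_nonneg)
  also have "\<dots> = (\<Sum>i<Suc m. (\<integral>\<^sup>+p. ennreal (insertion e m (drop_idx i p) (p i)) \<partial>Pi_lborel (Suc m)))"
    by (intro nn_integral_sum borel_measurable_insertion_drop_idx) auto
  also have "\<dots> = (\<Sum>i<Suc m. (\<integral>\<^sup>+q. (\<integral>\<^sup>+y. ennreal (insertion e m q y) \<partial>lborel) \<partial>Pi_lborel m))"
    by (intro sum.cong refl nn_integral_drop_idx[where F = "\<lambda>q y. ennreal (insertion e m q y)"]
        borel_measurable_insertion local) auto
  also have "\<dots> \<le> (\<Sum>i<Suc m. (\<integral>\<^sup>+q. ennreal (M * K) * ennreal (energy m q) \<partial>Pi_lborel m))"
    by (intro sum_mono nn_integral_mono nn_integral_insertion_le assms)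
  also have "\<dots> = ennreal (real (Suc m) * M * K) * (\<integral>\<^sup>+q. ennreal (energy m q) \<partial>Pi_lborel m)"
    using M_nonneg K borel_measurable_energy
    by (simp add: nn_integral_cmult ennreal_mult' ennreal_of_nat_eq_real_of_nat mult.assoc)
  finally show ?thesis .
qed

lemma moment_integrand_SucSuc_le:
  assumes "k \<le> 1"
  shows "weights (Suc (Suc j)) p * (B (Suc (Suc j)) p)\<^sup>2 * (lam + a * (norm (sumP (Suc (Suc j)) p))\<^sup>2) ^ k
    \<le> g\<^sup>2 / real (Suc (Suc j)) * (\<Sum>i<Suc (Suc j). insertion (2 - k) (Suc j) (drop_idx i p) (p i))"
proof -
  define D where "D = lam + a * (norm (sumP (Suc (Suc j)) p))\<^sup>2"
  define W where "W = weights (Suc (Suc j)) p"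
  define u where "u i = norm (p i) * norm (sumP (Suc j) (drop_idx i p)) * B (Suc j) (drop_idx i p)" for i
  have "0 < D" "0 \<le> W" unfolding D_def W_def by (simp_all add: resolvent_pos weights_nonneg)
  have D_pow: "D\<^sup>2 = D ^ k * D ^ (2 - k)" using assms by (simp flip: power_add)
  have summand: "W * (u i)\<^sup>2 / D ^ (2 - k) = insertion (2 - k) (Suc j) (drop_idx i p) (p i)"
    if "i < Suc (Suc j)" for i
    unfolding W_def u_def D_def insertion_def energy_def weights_Suc_drop_idx[OF that] sumP_Suc_drop_idx[OF that]
    by (simp add: power_mult_distrib mult_ac)
  have "W * (B (Suc (Suc j)) p)\<^sup>2 * D ^ k
      \<le> W * (g\<^sup>2 / real (Suc (Suc j)) * (\<Sum>i<Suc (Suc j). (u i)\<^sup>2) / D\<^sup>2) * D ^ k"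
    using B_SucSuc_sq_le[of j p] \<open>0 \<le> W\<close> \<open>0 < D\<close> unfolding u_def D_def
    by (intro mult_right_mono mult_left_mono) auto
  also have "\<dots> = g\<^sup>2 / real (Suc (Suc j)) * (W * (\<Sum>i<Suc (Suc j). (u i)\<^sup>2) / D ^ (2 - k))"
  proof -
    define S where "S = (\<Sum>i<Suc (Suc j). (u i)\<^sup>2)"
    define n where "n = real (Suc (Suc j))"
    have "0 < D ^ k" "0 < D ^ (2 - k)" "0 < n" using \<open>0 < D\<close> unfolding n_def by auto
    with \<open>0 < D\<close> assms have "W * (g\<^sup>2 / n * S / (D ^ k * D ^ (2 - k))) * D ^ k = g\<^sup>2 / n * (W * S / D ^ (2 - k))"
      by (simp add: field_simps)
    then show ?thesis unfolding S_def n_def D_pow .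
  qed
  also have "\<dots> = g\<^sup>2 / real (Suc (Suc j)) * (\<Sum>i<Suc (Suc j). W * (u i)\<^sup>2 / D ^ (2 - k))"
    by (simp only: sum_distrib_left sum_divide_distrib)
  also have "\<dots> = g\<^sup>2 / real (Suc (Suc j)) * (\<Sum>i<Suc (Suc j). insertion (2 - k) (Suc j) (drop_idx i p) (p i))"
    by (simp add: summand)
  finally show ?thesis unfolding W_def D_def .
qed

lemma moment_SucSuc_le:
  assumes "k \<le> 1" and kernel: "kernel_bound (2 - k) K"
  shows "moment k (Suc (Suc j)) \<le> ennreal (g\<^sup>2 * M * K / a) * moment 1 (Suc j)"
proof -
  define n where "n = real (Suc (Suc j))"
  have "0 < n" "0 \<le> K" using kernel unfolding n_def kernel_bound_def by auto
  have "moment k (Suc (Suc j)) \<le> (\<integral>\<^sup>+p. ennreal (g\<^sup>2 / n)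
      * ennreal (\<Sum>i<Suc (Suc j). insertion (2 - k) (Suc j) (drop_idx i p) (p i)) \<partial>Pi_lborel (Suc (Suc j)))"
    unfolding moment_def n_def using moment_integrand_SucSuc_le[OF assms(1)]
    by (intro nn_integral_mono) (simp add: ennreal_mult'[symmetric] ennreal_leI)
  also have "\<dots> = ennreal (g\<^sup>2 / n) * (\<integral>\<^sup>+p. ennreal (\<Sum>i<Suc (Suc j). insertion (2 - k) (Suc j) (drop_idx i p) (p i))
      \<partial>Pi_lborel (Suc (Suc j)))"
  proof (rule nn_integral_cmult)
    have "(\<lambda>p. \<Sum>i<Suc (Suc j). ennreal (insertion (2 - k) (Suc j) (drop_idx i p) (p i)))
        \<in> borel_measurable (Pi_lborel (Suc (Suc j)))"
      by (intro borel_measurable_sum borel_measurable_insertion_drop_idx) auto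
    moreover have "(\<Sum>i<Suc (Suc j). ennreal (insertion (2 - k) (Suc j) (drop_idx i p) (p i)))
        = ennreal (\<Sum>i<Suc (Suc j). insertion (2 - k) (Suc j) (drop_idx i p) (p i))" for p
      by (rule sum_ennreal) (rule insertion_nonneg)
    ultimately show "(\<lambda>p. ennreal (\<Sum>i<Suc (Suc j). insertion (2 - k) (Suc j) (drop_idx i p) (p i)))
        \<in> borel_measurable (Pi_lborel (Suc (Suc j)))"
      by simp
  qed
  also have "\<dots> \<le> ennreal (g\<^sup>2 / n) * (ennreal (n * M * K) * (\<integral>\<^sup>+q. ennreal (energy (Suc j) q) \<partial>Pi_lborel (Suc j)))"
    using nn_integral_sum_insertion_le[OF kernel, of "Suc j"] unfolding n_def by (rule mult_left_mono) simp
  also have "\<dots> \<le> ennreal (g\<^sup>2 / n) * (ennreal (n * M * K) * (ennreal (1 / a) * moment 1 (Suc j)))"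
    using nn_integral_energy_le[of "Suc j"] by (intro mult_left_mono) auto
  also have "\<dots> = ennreal (g\<^sup>2 / n * (n * M * K) * (1 / a)) * moment 1 (Suc j)"
    using M_nonneg \<open>0 \<le> K\<close> a_pos \<open>0 < n\<close> by (intro ennreal_mult3) auto
  also have "g\<^sup>2 / n * (n * M * K) * (1 / a) = g\<^sup>2 * M * K / a"
    using \<open>0 < n\<close> by simp
  finally show ?thesis .
qed

lemma moment_one_le:
  assumes "k \<le> 1" and kernel: "kernel_bound (2 - k) K"
  shows "moment k 1 \<le> ennreal (g\<^sup>2 * M * K)"
proof -
  interpret ps: product_sigma_finite "\<lambda>_::nat. (lborel :: (real^2) measure)"
    by (simp add: product_sigma_finite_def sigma_finite_lborel)
  have "0 \<le> K" using kernel unfolding kernel_bound_def by simp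
  define f where "f y = weight y * (g * norm y / (lam + a * (norm y)\<^sup>2))\<^sup>2 * (lam + a * (norm y)\<^sup>2) ^ k" for y :: "real^2"
  have [measurable]: "f \<in> borel_measurable borel" unfolding f_def by measurable
  have "moment k 1 = (\<integral>\<^sup>+p. ennreal (f (p 0)) \<partial>Pi_lborel 1)"
    unfolding moment_def f_def weights_def sumP_def by simp
  also have "\<dots> = (\<integral>\<^sup>+y. ennreal (f y) \<partial>lborel)"
  proof -
    have "{..<1::nat} = {0}" by auto
    moreover have "(\<lambda>y. ennreal (f y)) \<in> borel_measurable lborel" by measurable
    ultimately show ?thesis using ps.product_nn_integral_singleton[of "\<lambda>y. ennreal (f y)" 0] by simp
  qed
  also have "\<dots> \<le> (\<integral>\<^sup>+y. ennreal (g\<^sup>2 * M) * ennreal (indicator (cball 0 R) y / (lam + a * (norm (y :: real^2))\<^sup>2) ^ (2 - k)) \<partial>lborel)"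
  proof (rule nn_integral_mono)
    fix y :: "real^2"
    define D where "D = lam + a * (norm y)\<^sup>2"
    have "0 < D" unfolding D_def by (rule resolvent_pos)
    have "D\<^sup>2 = D ^ k * D ^ (2 - k)" using assms(1) by (simp flip: power_add)
    then have "f y = g\<^sup>2 * (weight y * (norm y)\<^sup>2) / D ^ (2 - k)"
      unfolding f_def D_def[symmetric] using \<open>0 < D\<close> by (simp add: power_divide power_mult_distrib field_simps)
    also have "\<dots> \<le> g\<^sup>2 * (M * indicator (cball 0 R) y) / D ^ (2 - k)"
      using \<open>0 < D\<close> by (intro divide_right_mono mult_left_mono weight_mult_norm_sq_le) auto
    finally show "ennreal (f y) \<le> ennreal (g\<^sup>2 * M) * ennreal (indicator (cball 0 R) y / (lam + a * (norm y)\<^sup>2) ^ (2 - k))"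
      using M_nonneg unfolding D_def by (simp add: ennreal_mult'[symmetric] ennreal_leI mult.assoc)
  qed
  also have "\<dots> = ennreal (g\<^sup>2 * M) * (\<integral>\<^sup>+y. ennreal (indicator (cball 0 R) y / (lam + a * (norm (y :: real^2))\<^sup>2) ^ (2 - k)) \<partial>lborel)"
    by (rule nn_integral_cmult) measurable
  also have "\<dots> \<le> ennreal (g\<^sup>2 * M) * ennreal K"
    using kernel unfolding kernel_bound_def by (intro mult_left_mono) (auto dest: spec[of _ 0])
  also have "\<dots> = ennreal (g\<^sup>2 * M * K)"
    using M_nonneg \<open>0 \<le> K\<close> by (simp add: ennreal_mult)
  finally show ?thesis .
qed

lemma moment_one_le_pow:
  assumes K: "kernel_bound 1 K" and E: "g\<^sup>2 * M * K \<le> E" "g\<^sup>2 * M * K / a \<le> E" and "0 < j"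
  shows "moment 1 j \<le> ennreal (E ^ j)"
  using \<open>0 < j\<close>
proof (induction j rule: nat_induct_non_zero)
  case 1
  have "moment 1 1 \<le> ennreal (g\<^sup>2 * M * K)" by (rule moment_one_le) (use K in auto)
  also have "\<dots> \<le> ennreal (E ^ 1)" using E(1) by (simp add: ennreal_leI)
  finally show ?case .
next
  case (Suc j)
  then obtain i where j: "j = Suc i" by (cases j) auto
  have "0 \<le> E" using E(1) K M_nonneg by (auto simp: kernel_bound_def intro: order_trans[rotated])
  have "moment 1 (Suc j) \<le> ennreal (g\<^sup>2 * M * K / a) * moment 1 j"
    unfolding j by (rule moment_SucSuc_le) (use K in auto)
  also have "\<dots> \<le> ennreal E * ennreal (E ^ j)"
    using E(2) Suc.IH by (intro mult_mono ennreal_leI) auto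
  finally show ?case using \<open>0 \<le> E\<close> by (simp add: ennreal_mult)
qed

lemma moment_zero_le_pow:
  assumes K1: "kernel_bound 1 K1" and E1: "g\<^sup>2 * M * K1 \<le> E1" "g\<^sup>2 * M * K1 / a \<le> E1"
    and K2: "kernel_bound 2 K2" and E2: "g\<^sup>2 * M * K2 \<le> E2" "g\<^sup>2 * M * K2 / a \<le> E2"
    and "0 < j"
  shows "moment 0 j \<le> ennreal (E2 * E1 ^ (j - 1))"
proof -
  from \<open>0 < j\<close> obtain i where j: "j = Suc i" by (cases j) auto
  show ?thesis
  proof (cases i)
    case 0
    have "moment 0 1 \<le> ennreal (g\<^sup>2 * M * K2)" by (rule moment_one_le) (use K2 in auto)
    also have "\<dots> \<le> ennreal E2" using E2(1) by (simp add: ennreal_leI)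
    finally show ?thesis unfolding j 0 by simp
  next
    case (Suc i')
    have "0 \<le> E1" using E1(1) K1 M_nonneg by (auto simp: kernel_bound_def intro: order_trans[rotated])
    have "moment 0 j \<le> ennreal (g\<^sup>2 * M * K2 / a) * moment 1 i"
      unfolding j Suc by (rule moment_SucSuc_le) (use K2 in auto)
    also have "\<dots> \<le> ennreal E2 * ennreal (E1 ^ i)"
      using E2(2) moment_one_le_pow[OF K1 E1, of i] Suc by (intro mult_mono ennreal_leI) simp_all
    finally show ?thesis using \<open>0 \<le> E1\<close> unfolding j by (simp add: ennreal_mult'')
  qed
qed

lemma prod_weight_le_weights:
  assumes V_le: "\<And>p. cmod (V p) \<le> M" and V_eq_0: "\<And>p. R < norm p \<Longrightarrow> V p = 0"
  shows "(\<Prod>i<j. Re (V (p i)) / (norm (p i))\<^sup>2) \<le> weights j p"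
proof -
  have "(\<Prod>i<j. Re (V (p i)) / (norm (p i))\<^sup>2) \<le> (\<Prod>i<j. \<bar>Re (V (p i))\<bar> / (norm (p i))\<^sup>2)"
    using abs_ge_self[of "\<Prod>i<j. Re (V (p i)) / (norm (p i))\<^sup>2"] by (simp add: abs_prod abs_divide)
  also have "\<dots> \<le> (\<Prod>i<j. weight (p i))"
  proof (intro prod_mono conjI)
    fix i
    show "\<bar>Re (V (p i))\<bar> / (norm (p i))\<^sup>2 \<le> weight (p i)"
    proof (cases "R < norm (p i)")
      case False
      have "\<bar>Re (V (p i))\<bar> \<le> M" using V_le[of "p i"] abs_Re_le_cmod order_trans by blast
      then show ?thesis using False unfolding weight_def by (simp add: indicator_def divide_right_mono)
    qed (simp add: V_eq_0 weight_nonneg)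
  qed simp
  finally show ?thesis unfolding weights_def .
qed

lemma gnorm_sq_le_moment:
  assumes "\<And>p. cmod (Vhat rho eps p) \<le> M" "\<And>p. R < norm p \<Longrightarrow> Vhat rho eps p = 0"
    and psi_le: "\<And>p. cmod (psi p) \<le> B j p"
  shows "gnorm_sq rho eps j psi \<le> ennreal (fact j) * moment 0 j"
  unfolding gnorm_sq_def moment_def
proof (intro mult_left_mono nn_integral_mono)
  fix p
  have "(cmod (psi p))\<^sup>2 \<le> (B j p)\<^sup>2" using psi_le[of p] by (intro power_mono) auto
  moreover have "(\<Prod>i<j. Re (Vhat rho eps (p i)) / (norm (p i))\<^sup>2) \<le> weights j p"
    by (rule prod_weight_le_weights) (use assms in auto)
  ultimately have "ennreal (\<Prod>i<j. Re (Vhat rho eps (p i)) / (norm (p i))\<^sup>2) * ennreal ((cmod (psi p))\<^sup>2)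
      \<le> ennreal (weights j p) * ennreal ((B j p)\<^sup>2)"
    by (intro mult_mono ennreal_leI) auto
  then show "ennreal (\<Prod>i<j. Re (Vhat rho eps (p i)) / (norm (p i))\<^sup>2) * ennreal ((cmod (psi p))\<^sup>2)
      \<le> ennreal (weights j p * (B j p)\<^sup>2 * (lam + a * (norm (sumP j p))\<^sup>2) ^ 0)"
    using weights_nonneg by (simp add: ennreal_mult)
qed simp

lemma gnorm_sq_sqrtL0_le_moment:
  assumes "\<And>p. cmod (Vhat rho eps p) \<le> M" "\<And>p. R < norm p \<Longrightarrow> Vhat rho eps p = 0"
    and psi_le: "\<And>p. cmod (psi p) \<le> B j p" and a: "a = nu\<^sup>2 / 2"
  shows "gnorm_sq rho eps j (sqrtL0 nu j psi) \<le> ennreal (fact j) * moment 1 j"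
  unfolding gnorm_sq_def moment_def
proof (intro mult_left_mono nn_integral_mono)
  fix p
  have "(cmod (sqrtL0 nu j psi p))\<^sup>2 = a * (norm (sumP j p))\<^sup>2 * (cmod (psi p))\<^sup>2"
    unfolding sqrtL0_def a by (simp add: norm_mult power_mult_distrib)
  also have "\<dots> \<le> (B j p)\<^sup>2 * (lam + a * (norm (sumP j p))\<^sup>2) ^ 1"
    using psi_le[of p] a_pos lam_pos by (simp add: mult.commute mult_mono power_mono)
  finally have "(cmod (sqrtL0 nu j psi p))\<^sup>2 \<le> (B j p)\<^sup>2 * (lam + a * (norm (sumP j p))\<^sup>2) ^ 1" .
  moreover have "(\<Prod>i<j. Re (Vhat rho eps (p i)) / (norm (p i))\<^sup>2) \<le> weights j p"
    by (rule prod_weight_le_weights) (use assms in auto)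
  ultimately have "ennreal (\<Prod>i<j. Re (Vhat rho eps (p i)) / (norm (p i))\<^sup>2) * ennreal ((cmod (sqrtL0 nu j psi p))\<^sup>2)
      \<le> ennreal (weights j p) * ennreal ((B j p)\<^sup>2 * (lam + a * (norm (sumP j p))\<^sup>2) ^ 1)"
    by (intro mult_mono ennreal_leI) auto
  then show "ennreal (\<Prod>i<j. Re (Vhat rho eps (p i)) / (norm (p i))\<^sup>2) * ennreal ((cmod (sqrtL0 nu j psi p))\<^sup>2)
      \<le> ennreal (weights j p * (B j p)\<^sup>2 * (lam + a * (norm (sumP j p))\<^sup>2) ^ 1)"
    using weights_nonneg by (simp add: ennreal_mult' mult.assoc)
qed simp

end

text \<open>The constants of \<open>kernel_bound_1\<close> (per unit of \<open>ln R\<close>) and \<open>kernel_bound_2\<close>, multiplied by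
  \<open>lhat\<^sup>2 M (1 + 1/a)\<close>.\<close>
definition growth_const :: "real \<Rightarrow> real \<Rightarrow> real \<Rightarrow> real \<Rightarrow> real" where
  "growth_const M lhat a lam = lhat\<^sup>2 * M
     * (unit_ball_vol 2 * (1 / lam + 9 / a) / ln 2 + unit_ball_vol 2 * (1 / lam\<^sup>2 + 16 / (3 * a\<^sup>2)))
     * (1 + 1 / a)"

lemma growth_const_nonneg: "0 \<le> M \<Longrightarrow> 0 < a \<Longrightarrow> 0 < lam \<Longrightarrow> 0 \<le> growth_const M lhat a lam"
  unfolding growth_const_def by simp

lemma le_growth_const:
  assumes "0 \<le> M" "0 < a" "0 \<le> K"
    and "K \<le> unit_ball_vol 2 * (1 / lam + 9 / a) / ln 2 + unit_ball_vol 2 * (1 / lam\<^sup>2 + 16 / (3 * a\<^sup>2))"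
  shows "lhat\<^sup>2 * M * K \<le> growth_const M lhat a lam" and "lhat\<^sup>2 * M * K / a \<le> growth_const M lhat a lam"
proof -
  define Y where "Y = lhat\<^sup>2 * M
     * (unit_ball_vol 2 * (1 / lam + 9 / a) / ln 2 + unit_ball_vol 2 * (1 / lam\<^sup>2 + 16 / (3 * a\<^sup>2)))"
  have "growth_const M lhat a lam = Y + Y / a"
    unfolding Y_def growth_const_def by (simp add: distrib_left)
  moreover have "lhat\<^sup>2 * M * K \<le> Y" unfolding Y_def using assms by (intro mult_left_mono) auto
  moreover have "0 \<le> lhat\<^sup>2 * M * K" using assms by simp
  ultimately show "lhat\<^sup>2 * M * K \<le> growth_const M lhat a lam" "lhat\<^sup>2 * M * K / a \<le> growth_const M lhat a lam"
    using assms(2) divide_right_mono[of "lhat\<^sup>2 * M * K" Y a] by (auto intro: add_increasing2 add_increasing)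
qed

context majorant_moments
begin

lemma moment_le_growth_const:
  assumes R: "2 \<le> R" and g: "g = lhat / sqrt (ln R)" and "0 < j"
  shows "moment 1 j \<le> ennreal (growth_const M lhat a lam ^ j)"
    and "moment 0 j \<le> ennreal (growth_const M lhat a lam ^ j / ln R)"
proof -
  define E where "E = growth_const M lhat a lam"
  define K1 where "K1 = unit_ball_vol 2 * (1 / lam + 9 / a) / ln 2"
  define K2 where "K2 = unit_ball_vol 2 * (1 / lam\<^sup>2 + 16 / (3 * a\<^sup>2))"
  have "0 < ln R" using R by (simp add: ln_gt_zero)
  have "0 \<le> K1" "0 \<le> K2" unfolding K1_def K2_def using lam_pos a_pos by simp_all
  then have "lhat\<^sup>2 * M * K1 \<le> E" "lhat\<^sup>2 * M * K1 / a \<le> E" "lhat\<^sup>2 * M * K2 \<le> E" "lhat\<^sup>2 * M * K2 / a \<le> E"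
    using le_growth_const[OF M_nonneg a_pos, of K1 lam lhat] le_growth_const[OF M_nonneg a_pos, of K2 lam lhat]
    unfolding E_def K1_def K2_def by simp_all
  moreover have gK1: "g\<^sup>2 * M * (K1 * ln R) = lhat\<^sup>2 * M * K1" and gK2: "g\<^sup>2 * M * K2 = lhat\<^sup>2 * M * K2 / ln R"
    using \<open>0 < ln R\<close> unfolding g by (simp_all add: power_divide)
  ultimately have E1: "g\<^sup>2 * M * (K1 * ln R) \<le> E" "g\<^sup>2 * M * (K1 * ln R) / a \<le> E"
    and E2: "g\<^sup>2 * M * K2 \<le> E / ln R" "g\<^sup>2 * M * K2 / a \<le> E / ln R"
    using \<open>0 < ln R\<close> divide_right_mono[of "lhat\<^sup>2 * M * K2 / a" E "ln R"] unfolding gK1 gK2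
    by (auto simp: mult.commute intro: divide_right_mono)
  have K1: "kernel_bound 1 (K1 * ln R)" using kernel_bound_1[OF R] unfolding K1_def by (simp add: mult_ac)
  have K2: "kernel_bound 2 K2" unfolding K2_def by (rule kernel_bound_2)
  show "moment 1 j \<le> ennreal (growth_const M lhat a lam ^ j)"
    using moment_one_le_pow[OF K1 E1 \<open>0 < j\<close>] unfolding E_def .
  have "E / ln R * E ^ (j - 1) = E ^ j / ln R" using \<open>0 < j\<close> by (cases j) auto
  then show "moment 0 j \<le> ennreal (growth_const M lhat a lam ^ j / ln R)"
    using moment_zero_le_pow[OF K1 E1 K2 E2 \<open>0 < j\<close>] unfolding E_def[symmetric] by (simp only:)
qed

end

section \<open>The norms of \<open>b\<^sub>j\<close>\<close>

lemma gnorm_sq_bfun_le: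
  assumes lhat: "0 < lhat" and nu: "0 < nu" and lam: "0 < lam"
    and rho: "schwartz rho" and supp: "\<forall>p. norm p > 1 \<longrightarrow> ft rho p = 0"
    and eps: "0 < eps" "eps < 1 / 2" and "0 < j"
  defines "E \<equiv> growth_const ((LINT x|lborel. \<bar>rho x\<bar>)\<^sup>2) lhat (nu\<^sup>2 / 2) lam"
  shows "gnorm_sq rho eps j (bfun lhat nu lam eps n j c) \<le> ennreal (fact j * E ^ j / ln (1 / eps))"
    and "gnorm_sq rho eps j (sqrtL0 nu j (bfun lhat nu lam eps n j c)) \<le> ennreal (fact j * E ^ j)"
proof -
  define M where "M = (LINT x|lborel. \<bar>rho x\<bar>)\<^sup>2"
  define a where "a = nu\<^sup>2 / 2"
  have R: "2 \<le> 1 / eps" using eps by (simp add: field_simps)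
  interpret majorant_moments M "1 / eps" "lhat / sqrt (ln (1 / eps))" a lam
    by unfold_locales (use lam nu in \<open>auto simp: M_def a_def\<close>)
  have "E = growth_const M lhat a lam" unfolding E_def M_def a_def ..
  note moments = moment_le_growth_const[OF R refl \<open>0 < j\<close>, folded this]
  have Vhat: "cmod (Vhat rho eps p) \<le> M" "1 / eps < norm p \<Longrightarrow> Vhat rho eps p = 0" for p
    unfolding M_def using norm_Vhat_le[OF rho] Vhat_eq_0[OF rho supp eps(1)] by auto
  have b: "cmod (bfun lhat nu lam eps n j c p) \<le> B j p" for p
    using norm_bfun_le_majorant[OF lam less_imp_le[OF lhat] eps(1) _ \<open>0 < j\<close>] eps(2)
    unfolding a_def by simp
  have "gnorm_sq rho eps j (bfun lhat nu lam eps n j c) \<le> ennreal (fact j) * moment 0 j"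
    by (rule gnorm_sq_le_moment) (fact Vhat b)+
  also have "\<dots> \<le> ennreal (fact j) * ennreal (E ^ j / ln (1 / eps))"
    using moments(2) by (rule mult_left_mono) simp
  also have "\<dots> = ennreal (fact j * E ^ j / ln (1 / eps))"
    using ennreal_mult'[of "fact j" "E ^ j / ln (1 / eps)"] by simp
  finally show "gnorm_sq rho eps j (bfun lhat nu lam eps n j c) \<le> ennreal (fact j * E ^ j / ln (1 / eps))" .
  have "gnorm_sq rho eps j (sqrtL0 nu j (bfun lhat nu lam eps n j c)) \<le> ennreal (fact j) * moment 1 j"
    by (rule gnorm_sq_sqrtL0_le_moment[OF _ _ _ a_def]) (fact Vhat b)+
  also have "\<dots> \<le> ennreal (fact j) * ennreal (E ^ j)"
    using moments(1) by (rule mult_left_mono) simp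
  also have "\<dots> = ennreal (fact j * E ^ j)"
    using ennreal_mult'[of "fact j" "E ^ j"] by simp
  finally show "gnorm_sq rho eps j (sqrtL0 nu j (bfun lhat nu lam eps n j c)) \<le> ennreal (fact j * E ^ j)" .
qed

lemma fact_mult_pow_le_sq:
  fixes E lam eps :: real
  assumes E: "0 \<le> E" and lam: "0 < lam" and eps: "0 < eps" "eps < 1 / 2" and j: "j \<in> {1..n}"
  defines "C \<equiv> sqrt (max 1 lam * fact n * (1 + E))"
  shows "fact j * E ^ j / ln (1 / eps) \<le> (C ^ j / sqrt (lam * ln (1 / eps)))\<^sup>2"
    and "fact j * E ^ j \<le> (C ^ j)\<^sup>2"
proof -
  define A where "A = max 1 lam"
  have A: "1 \<le> A" "lam \<le> A" unfolding A_def by simp_all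
  have "A * (fact j * E ^ j) \<le> A * (fact n * (1 + E) ^ j)"
    using E A j by (intro mult_left_mono mult_mono fact_mono power_mono) auto
  also have "\<dots> \<le> A ^ j * (fact n ^ j * (1 + E) ^ j)"
    using E A j by (intro mult_mono power_increasing[of 1 j, simplified] fact_ge_1 order_refl)
      (auto simp: one_le_power)
  also have "\<dots> = ((sqrt (A * fact n * (1 + E)))\<^sup>2) ^ j"
    using E A by (simp add: power_mult_distrib)
  also have "\<dots> = (C ^ j)\<^sup>2" unfolding C_def A_def by (simp only: power_mult[symmetric] mult.commute)
  finally have C: "A * (fact j * E ^ j) \<le> (C ^ j)\<^sup>2" .
  have "fact j * E ^ j \<le> A * (fact j * E ^ j)" and lam_le: "lam * (fact j * E ^ j) \<le> A * (fact j * E ^ j)"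
    using E A by (intro mult_right_mono order_trans[OF _ mult_right_mono[OF A(1)]]; simp)+
  with C show "fact j * E ^ j \<le> (C ^ j)\<^sup>2" by linarith
  have "0 < ln (1 / eps)" using eps by (simp add: field_simps ln_gt_zero)
  then have "(C ^ j / sqrt (lam * ln (1 / eps)))\<^sup>2 = (C ^ j)\<^sup>2 / (lam * ln (1 / eps))"
    using lam by (simp add: power_divide)
  then show "fact j * E ^ j / ln (1 / eps) \<le> (C ^ j / sqrt (lam * ln (1 / eps)))\<^sup>2"
    using order_trans[OF lam_le C] \<open>0 < ln (1 / eps)\<close> lam by (simp add: field_simps)
qed

theorem proposition4p4:
  fixes rho :: "real^2 \<Rightarrow> real" and lhat nu lam :: real
  assumes "lhat > 0" and "nu > 0" and "lam > 0"
    and "schwartz rho" and "radial rho"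
    and "integral\<^sup>L lborel rho = 1"
    and "\<forall>p. norm p > 1 \<longrightarrow> ft rho p = 0"
  shows "\<forall>n::nat. \<exists>C>0. \<forall>eps::real. 0 < eps \<and> eps < 1/2 \<longrightarrow>
           (\<forall>j\<in>{1..n}. \<forall>c\<in>{1,2::nat}.
              gnorm_sq rho eps j (bfun lhat nu lam eps n j c)
                \<le> ennreal ((C ^ j / sqrt (lam * ln (1 / eps)))\<^sup>2)
            \<and> gnorm_sq rho eps j (sqrtL0 nu j (bfun lhat nu lam eps n j c))
                \<le> ennreal ((C ^ j)\<^sup>2))"
proof
  fix n :: nat
  define E where "E = growth_const ((LINT x|lborel. \<bar>rho x\<bar>)\<^sup>2) lhat (nu\<^sup>2 / 2) lam"
  define C where "C = sqrt (max 1 lam * fact n * (1 + E))"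
  have E: "0 \<le> E" unfolding E_def using assms(2,3) by (intro growth_const_nonneg) auto
  then have "0 < C" unfolding C_def by (simp add: add_nonneg_pos)
  moreover have "gnorm_sq rho eps j (bfun lhat nu lam eps n j c) \<le> ennreal ((C ^ j / sqrt (lam * ln (1 / eps)))\<^sup>2)
      \<and> gnorm_sq rho eps j (sqrtL0 nu j (bfun lhat nu lam eps n j c)) \<le> ennreal ((C ^ j)\<^sup>2)"
    if "0 < eps \<and> eps < 1 / 2" "j \<in> {1..n}" for eps j c
    using gnorm_sq_bfun_le[OF assms(1-4,7), of eps j n c, folded E_def]
      fact_mult_pow_le_sq[OF E assms(3) _ _ that(2), of eps, folded C_def] that
    by (auto intro: order_trans[OF _ ennreal_leI])
  ultimately show "\<exists>C>0. \<forall>eps::real. 0 < eps \<and> eps < 1/2 \<longrightarrow>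
      (\<forall>j\<in>{1..n}. \<forall>c\<in>{1,2::nat}.
         gnorm_sq rho eps j (bfun lhat nu lam eps n j c) \<le> ennreal ((C ^ j / sqrt (lam * ln (1 / eps)))\<^sup>2)
       \<and> gnorm_sq rho eps j (sqrtL0 nu j (bfun lhat nu lam eps n j c)) \<le> ennreal ((C ^ j)\<^sup>2))"
    by blast
qed

end
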